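(* Fix $\varepsilon\in(0,1/2)$ and let $\tau_{\varepsilon K}=\inf\{t\ge0: G_t=\lfloor\varepsilon K\rfloor\}$ for the incremental construction. Then (a) $\displaystyle \frac{\tau_{\varepsilon K}}{K}\to\frac12\log\left(\frac{1}{1-2\varepsilon}\right)$ in probability as $K\to\infty$; (b) $\displaystyle \left(\frac{R_{\tau_{\varepsilon K}}}{K},\frac{C_{\tau_{\varepsilon K}}}{K}\right)\to\left(1-\sqrt{1-2\varepsilon},\,1-\sqrt{1-2\varepsilon}\right)$ in probability as $K\to\infty$.
   Context: Incremental construction. Fix an integer $K\ge2$, $[n]=\{1,\dots,n\}$. A random $K\times K$ matrix $\Psi$ is filled with the integers $1,\dots,K^2$, the integer $s$ being placed at step $s$. After step $t$, $R_t$ and $C_t$ denote the numbers of nonempty rows and columns (the nonempty rows are always $1,\dots,R_t$ and the nonempty columns $1,\dots,C_t$), $M_t$ is the submatrix with rows $[R_t]$ and columns $[C_t]$, and $G_t$ is the number of entries colored green; $R_0=C_0=G_0=0$. Step 1: $\Psi(1,1)=1$ and $(1,1)$ is colored green (so $R_1=C_1=G_1=1$). For $t=1,\dots,K^2-1$, given everything so far, step $t+1$ is: with conditional probability $\rho_{t+1}=\frac{(K-R_t)K}{K^2-t}$ a new row is created, i.e. $R_{t+1}=R_t+1$, and then, independently, with probability $\kappa_{t+1}=\frac{K-C_t}{K}$ also a new column is created: $C_{t+1}=C_t+1$, $\Psi(R_{t+1},C_{t+1})=t+1$ and this entry is colored green; otherwise $C_{t+1}=C_t$ and $\Psi(R_{t+1},Z)=t+1$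 with $Z$ uniform in $[C_t]$. With the complementary probability $1-\rho_{t+1}$, $R_{t+1}=R_t$ and a cell $(X,Y)$ is chosen uniformly among the empty cells of rows $[R_t]$ (columns in $[K]$); if $(X,Y)\notin M_t$ (i.e. $Y>C_t$) then $C_{t+1}=C_t+1$ and $\Psi(X,C_{t+1})=t+1$; otherwise $C_{t+1}=C_t$ and $\Psi(X,Y)=t+1$. *)

theory Defs
  imports "HOL-Probability.Probability"
begin

text \<open>State of the incremental construction after step t:
  (R_t, C_t, set of green cells, matrix Psi).  The matrix is a function on
  index pairs (row, column), with value 0 meaning "empty" (entries are 1..K^2).\<close>

type_synonym ic_state = "nat \<times> nat \<times> (nat \<times> nat) set \<times> (nat \<times> nat \<Rightarrow> nat)"

definition ic_R :: "ic_state \<Rightarrow> nat" where "ic_R s = fst s"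
definition ic_C :: "ic_state \<Rightarrow> nat" where "ic_C s = fst (snd s)"
definition ic_G :: "ic_state \<Rightarrow> nat" where "ic_G s = card (fst (snd (snd s)))"

definition ic_state0 :: ic_state where
  "ic_state0 = (0, 0, {}, (\<lambda>_. 0))"

definition ic_state1 :: ic_state where
  "ic_state1 = (1, 1, {(1,1)}, (\<lambda>_. 0)((1,1) := 1))"

text \<open>Step t+1, given the state after step t (t >= 1).\<close>
definition ic_step :: "nat \<Rightarrow> nat \<Rightarrow> ic_state \<Rightarrow> ic_state pmf" where
  "ic_step K t s = (case s of (R, C, Gr, Psi) \<Rightarrow>
     bind_pmf (bernoulli_pmf ((real K - real R) * real K / (real K ^ 2 - real t))) (\<lambda>newrow.
       if newrow then
         bind_pmf (bernoulli_pmf ((real K - real C) / real K)) (\<lambda>newcol.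
           if newcol then
             return_pmf (R + 1, C + 1, insert (R + 1, C + 1) Gr, Psi((R + 1, C + 1) := t + 1))
           else
             bind_pmf (pmf_of_set {1..C}) (\<lambda>Z.
               return_pmf (R + 1, C, Gr, Psi((R + 1, Z) := t + 1))))
       else
         bind_pmf (pmf_of_set {(x, y). x \<in> {1..R} \<and> y \<in> {1..K} \<and> Psi (x, y) = 0})
           (\<lambda>(X, Y).
              if Y > C then return_pmf (R, C + 1, Gr, Psi((X, C + 1) := t + 1))
              else return_pmf (R, C, Gr, Psi((X, Y) := t + 1)))))"

fun ic_traj :: "nat \<Rightarrow> nat \<Rightarrow> ic_state list pmf" where
  "ic_traj K 0 = return_pmf [ic_state0]"
| "ic_traj K (Suc 0) = return_pmf [ic_state0, ic_state1]"
| "ic_traj K (Suc (Suc n)) =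
     bind_pmf (ic_traj K (Suc n)) (\<lambda>xs. map_pmf (\<lambda>s. xs @ [s]) (ic_step K (Suc n) (last xs)))"

definition ic_full :: "nat \<Rightarrow> ic_state list pmf" where
  "ic_full K = ic_traj K (K ^ 2)"

text \<open>Hitting time inf{t >= 0 : G_t = m}; None encodes inf of the empty set (= infinity).\<close>
definition ic_tau :: "nat \<Rightarrow> ic_state list \<Rightarrow> nat option" where
  "ic_tau m xs = (if \<exists>t < length xs. ic_G (xs ! t) = m
                  then Some (LEAST t. t < length xs \<and> ic_G (xs ! t) = m) else None)"

end

theory Submission
  imports Defs "HOL-Real_Asymp.Real_Asymp"
begin

(* Write b_n = K / (K^2 - n). At step n + 1 the number K - R_n of empty rows drops by one with
   probability (K - R_n) b_n; adding up the two ways in which a column can be opened, the number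
   K - C_n of empty columns drops by one with probability (K - C_n) b_n; and a green cell appears
   with probability (K - R_n) (K - C_n) / (K^2 - n). Hence K - R_n and K - C_n stay within
   O(sqrt n) in L^2 of the deterministic mu_n = (K - 1) prod_{0<j<n} (1 - b_j), and G_n stays
   within O(sqrt n) of its compensator, which is itself close to 1 + sum_{0<j<n} mu_j^2 / (K^2 - j).
   At times n ~ s K these profiles give R_n/K, C_n/K -> 1 - e^(-s) and
   G_n/K -> (1 - e^(-2s))/2 in probability. Since G moves by unit steps, the time at which it
   reaches eps K lies between s_1 K and s_2 K as soon as (1 - e^(-2 s_1))/2 < eps < (1 - e^(-2 s_2))/2,
   so it equals (1/2) ln (1 / (1 - 2 eps)) K + o(K); as R and C are monotone, their limits carry
   over to the hitting time. *)

lemma set_pmf_bernoulli_TrueD: "True \<in> set_pmf (bernoulli_pmf p) \<Longrightarrow> 0 < p"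
  by (auto simp: set_pmf_iff bernoulli_pmf.rep_eq split: if_splits)

lemma set_pmf_bernoulli_FalseD: "False \<in> set_pmf (bernoulli_pmf p) \<Longrightarrow> p < 1"
  by (auto simp: set_pmf_iff bernoulli_pmf.rep_eq split: if_splits)

lemma finite_set_pmf_bool: "finite (set_pmf (p :: bool pmf))"
  by (rule finite_subset[OF subset_UNIV]) simp

lemma expectation_bind_pmf_finite:
  fixes h :: "'b \<Rightarrow> real"
  assumes "finite (set_pmf p)" "\<And>x. x \<in> set_pmf p \<Longrightarrow> finite (set_pmf (f x))"
  shows "measure_pmf.expectation (bind_pmf p f) h =
         measure_pmf.expectation p (\<lambda>x. measure_pmf.expectation (f x) h)"
  using pmf_expectation_bind[OF assms(1) assms(2) subset_refl, where h=h]
  by (subst integral_measure_pmf[OF assms(1)]) auto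

lemma expectation_mono_finite_pmf:
  fixes f g :: "'a \<Rightarrow> real"
  assumes "finite (set_pmf M)" "\<And>x. x \<in> set_pmf M \<Longrightarrow> f x \<le> g x"
  shows "measure_pmf.expectation M f \<le> measure_pmf.expectation M g"
  using assms by (intro integral_mono_AE integrable_measure_pmf_finite) (auto simp: AE_measure_pmf_iff)

lemma expectation_abs_le_sqrt:
  fixes X :: "'a \<Rightarrow> real"
  assumes "finite (set_pmf M)"
  shows "measure_pmf.expectation M (\<lambda>x. \<bar>X x\<bar>) \<le> sqrt (measure_pmf.expectation M (\<lambda>x. (X x)\<^sup>2))"
proof (rule real_le_rsqrt)
  show "(measure_pmf.expectation M (\<lambda>x. \<bar>X x\<bar>))\<^sup>2 \<le> measure_pmf.expectation M (\<lambda>x. (X x)\<^sup>2)"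
    using measure_pmf.variance_eq[of M "\<lambda>x. \<bar>X x\<bar>"] measure_pmf.variance_positive[of M "\<lambda>x. \<bar>X x\<bar>"] assms
    by (simp add: integrable_measure_pmf_finite)
qed

definition tendsto_in_prob :: "(nat \<Rightarrow> 'a pmf) \<Rightarrow> (nat \<Rightarrow> 'a \<Rightarrow> real) \<Rightarrow> real \<Rightarrow> bool" where
  "tendsto_in_prob M X c \<longleftrightarrow> (\<forall>\<eta>>0. (\<lambda>K. measure_pmf.prob (M K) {x. \<eta> \<le> \<bar>X K x - c\<bar>}) \<longlonglongrightarrow> 0)"

lemma tendsto_in_probI_L1:
  fixes a e :: "nat \<Rightarrow> real"
  assumes fin: "\<And>K. finite (set_pmf (M K))" and a: "a \<longlonglongrightarrow> c" and e: "e \<longlonglongrightarrow> 0"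
    and bound: "eventually (\<lambda>K. measure_pmf.expectation (M K) (\<lambda>x. \<bar>X K x - a K\<bar>) \<le> e K) sequentially"
  shows "tendsto_in_prob M X c"
  unfolding tendsto_in_prob_def
proof (intro allI impI)
  fix \<eta> :: real assume \<eta>: "0 < \<eta>"
  have close: "eventually (\<lambda>K. \<bar>a K - c\<bar> < \<eta> / 2) sequentially"
    using tendstoD[OF a, of "\<eta> / 2"] \<eta> by (simp add: dist_real_def)
  show "(\<lambda>K. measure_pmf.prob (M K) {x. \<eta> \<le> \<bar>X K x - c\<bar>}) \<longlonglongrightarrow> 0"
  proof (rule tendsto_sandwich[OF _ _ tendsto_const])
    show "eventually (\<lambda>K. 0 \<le> measure_pmf.prob (M K) {x. \<eta> \<le> \<bar>X K x - c\<bar>}) sequentially" by simp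
    show "eventually (\<lambda>K. measure_pmf.prob (M K) {x. \<eta> \<le> \<bar>X K x - c\<bar>} \<le> e K / (\<eta> / 2)) sequentially"
      using close bound
    proof eventually_elim
      case (elim K)
      have "{x. \<eta> \<le> \<bar>X K x - c\<bar>} \<subseteq> {x. \<eta> / 2 \<le> \<bar>X K x - a K\<bar>}"
      proof safe
        fix x assume "\<eta> \<le> \<bar>X K x - c\<bar>"
        moreover have "\<bar>X K x - c\<bar> \<le> \<bar>X K x - a K\<bar> + \<bar>a K - c\<bar>"
          using abs_triangle_ineq[of "X K x - a K" "a K - c"] by simp
        ultimately show "\<eta> / 2 \<le> \<bar>X K x - a K\<bar>" using elim(1) by linarith
      qed
      then have "measure_pmf.prob (M K) {x. \<eta> \<le> \<bar>X K x - c\<bar>} \<le> measure_pmf.prob (M K) {x. \<eta> / 2 \<le> \<bar>X K x - a K\<bar>}"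
        by (rule measure_pmf.finite_measure_mono) simp
      also have "\<dots> \<le> measure_pmf.expectation (M K) (\<lambda>x. \<bar>X K x - a K\<bar>) / (\<eta> / 2)"
        using integral_Markov_inequality_measure[of "M K" "\<lambda>x. \<bar>X K x - a K\<bar>" "{}" "\<eta> / 2"] fin \<eta>
        by (simp add: integrable_measure_pmf_finite)
      also have "\<dots> \<le> e K / (\<eta> / 2)" using elim(2) \<eta> by (simp add: divide_right_mono)
      finally show ?case .
    qed
    show "(\<lambda>K. e K / (\<eta> / 2)) \<longlonglongrightarrow> 0" by (rule tendsto_divide_zero[OF e])
  qed
qed

lemma tendsto_in_probD:
  "tendsto_in_prob M X c \<Longrightarrow> 0 < \<eta> \<Longrightarrow> (\<lambda>K. measure_pmf.prob (M K) {x. \<eta> \<le> \<bar>X K x - c\<bar>}) \<longlonglongrightarrow> 0"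
  by (simp add: tendsto_in_prob_def)

lemma prob_tendsto_zero_subset:
  assumes "eventually (\<lambda>K. A K \<inter> set_pmf (M K) \<subseteq> B K) sequentially"
    and "(\<lambda>K. measure_pmf.prob (M K) (B K)) \<longlonglongrightarrow> 0"
  shows "(\<lambda>K. measure_pmf.prob (M K) (A K)) \<longlonglongrightarrow> 0"
proof (rule tendsto_sandwich[OF _ _ tendsto_const assms(2)])
  show "eventually (\<lambda>K. 0 \<le> measure_pmf.prob (M K) (A K)) sequentially" by simp
  show "eventually (\<lambda>K. measure_pmf.prob (M K) (A K) \<le> measure_pmf.prob (M K) (B K)) sequentially"
    using assms(1)
  proof eventually_elim
    case (elim K)
    have "measure_pmf.prob (M K) (A K) = measure_pmf.prob (M K) (A K \<inter> set_pmf (M K))"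
      by (simp add: measure_Int_set_pmf)
    also have "\<dots> \<le> measure_pmf.prob (M K) (B K)"
      using elim by (intro measure_pmf.finite_measure_mono) auto
    finally show ?case .
  qed
qed

lemma prob_Un_tendsto_zero:
  assumes "(\<lambda>K. measure_pmf.prob (M K) (A K)) \<longlonglongrightarrow> 0" "(\<lambda>K. measure_pmf.prob (M K) (B K)) \<longlonglongrightarrow> 0"
  shows "(\<lambda>K. measure_pmf.prob (M K) (A K \<union> B K)) \<longlonglongrightarrow> 0"
proof (rule tendsto_sandwich[OF _ _ tendsto_const tendsto_add_zero[OF assms]])
  show "eventually (\<lambda>K. 0 \<le> measure_pmf.prob (M K) (A K \<union> B K)) sequentially" by simp
  show "eventually (\<lambda>K. measure_pmf.prob (M K) (A K \<union> B K)
      \<le> measure_pmf.prob (M K) (A K) + measure_pmf.prob (M K) (B K)) sequentially"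
    by (intro always_eventually allI measure_Un_le) auto
qed

lemma tendsto_power_one_minus_exp:
  fixes b :: "nat \<Rightarrow> real" and m :: "nat \<Rightarrow> nat"
  assumes b0: "eventually (\<lambda>K. 0 \<le> b K) sequentially" and b: "b \<longlonglongrightarrow> 0"
    and mb: "(\<lambda>K. real (m K) * b K) \<longlonglongrightarrow> c"
  shows "(\<lambda>K. (1 - b K) ^ m K) \<longlonglongrightarrow> exp (- c)"
proof -
  have "eventually (\<lambda>K. b K < 1/2) sequentially" by (rule order_tendstoD(2)[OF b]) simp
  with b0 have small: "eventually (\<lambda>K. 0 \<le> b K \<and> b K \<le> 1/2) sequentially"
    by eventually_elim simp
  have ln: "(\<lambda>K. real (m K) * ln (1 - b K)) \<longlonglongrightarrow> - c"
  proof (rule tendsto_sandwich)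
    show "eventually (\<lambda>K. - (real (m K) * b K) - 2 * (real (m K) * b K) * b K \<le> real (m K) * ln (1 - b K)) sequentially"
      using small
    proof eventually_elim
      case (elim K)
      have "- b K - 2 * (b K)\<^sup>2 \<le> ln (1 - b K)" using elim by (intro ln_one_minus_pos_lower_bound) auto
      then have "real (m K) * (- b K - 2 * (b K)\<^sup>2) \<le> real (m K) * ln (1 - b K)" by (intro mult_left_mono) auto
      then show ?case by (simp add: power2_eq_square algebra_simps)
    qed
    show "eventually (\<lambda>K. real (m K) * ln (1 - b K) \<le> - (real (m K) * b K)) sequentially"
      using small
    proof eventually_elim
      case (elim K)
      have "ln (1 - b K) \<le> - b K" using elim by (intro ln_one_minus_pos_upper_bound) auto
      then show ?case using mult_left_mono[of "ln (1 - b K)" "- b K" "real (m K)"] by simp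
    qed
    have "(\<lambda>K. - (real (m K) * b K) - 2 * (real (m K) * b K) * b K) \<longlonglongrightarrow> - c - 2 * c * 0"
      by (intro tendsto_intros mb b)
    then show "(\<lambda>K. - (real (m K) * b K) - 2 * (real (m K) * b K) * b K) \<longlonglongrightarrow> - c" by simp
    show "(\<lambda>K. - (real (m K) * b K)) \<longlonglongrightarrow> - c" by (intro tendsto_intros mb)
  qed
  have "eventually (\<lambda>K. exp (real (m K) * ln (1 - b K)) = (1 - b K) ^ m K) sequentially"
    using small by eventually_elim (simp add: exp_of_nat_mult)
  with tendsto_exp[OF ln] show ?thesis by (rule Lim_transform_eventually)
qed

lemma tendsto_geometric_sum_scaled:
  fixes b :: "nat \<Rightarrow> real" and m :: "nat \<Rightarrow> nat"
  assumes b: "b \<longlonglongrightarrow> 0" and Kb: "(\<lambda>K. real K * b K) \<longlonglongrightarrow> 1" and mb: "(\<lambda>K. real (m K) * b K) \<longlonglongrightarrow> s"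
    and pos: "eventually (\<lambda>K. 0 < b K) sequentially"
  shows "(\<lambda>K. (\<Sum>j<m K. (1 - b K) ^ (2 * j)) / real K) \<longlonglongrightarrow> (1 - exp (- (2 * s))) / 2"
proof -
  have "(\<lambda>K. real (2 * m K) * b K) \<longlonglongrightarrow> 2 * s"
    using tendsto_mult_left[OF mb, of 2] by (simp add: mult.assoc)
  then have pow: "(\<lambda>K. (1 - b K) ^ (2 * m K)) \<longlonglongrightarrow> exp (- (2 * s))"
    using pos b by (intro tendsto_power_one_minus_exp) (auto elim: eventually_mono)
  have "(\<lambda>K. (1 - (1 - b K) ^ (2 * m K)) / (real K * b K * (2 - b K)))
      \<longlonglongrightarrow> (1 - exp (- (2 * s))) / (1 * (2 - 0))"
    by (intro tendsto_intros pow Kb b) simp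
  moreover have "eventually (\<lambda>K. (1 - (1 - b K) ^ (2 * m K)) / (real K * b K * (2 - b K))
      = (\<Sum>j<m K. (1 - b K) ^ (2 * j)) / real K) sequentially"
    using pos order_tendstoD(2)[OF b zero_less_one]
  proof eventually_elim
    case (elim K)
    then have "(1 - b K)\<^sup>2 \<noteq> 1" "1 - (1 - b K)\<^sup>2 = b K * (2 - b K)"
      by (auto simp: power2_eq_square algebra_simps)
    then have "(\<Sum>j<m K. (1 - b K) ^ (2 * j)) = (1 - (1 - b K) ^ (2 * m K)) / (b K * (2 - b K))"
      by (simp add: power_mult sum_gp_strict)
    then show ?case by (simp add: field_simps)
  qed
  ultimately show ?thesis by (simp add: Lim_transform_eventually)
qed

lemma abs_mult_sub_square_le:
  fixes x y m a :: real
  assumes "0 \<le> x" "x \<le> a" "0 \<le> m" "m \<le> a"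
  shows "\<bar>x * y - m\<^sup>2\<bar> \<le> a * (\<bar>x - m\<bar> + \<bar>y - m\<bar>)"
proof -
  have "\<bar>x * y - m\<^sup>2\<bar> = \<bar>x * (y - m) + m * (x - m)\<bar>" by (simp add: power2_eq_square algebra_simps)
  also have "\<dots> \<le> x * \<bar>y - m\<bar> + m * \<bar>x - m\<bar>"
    using assms abs_triangle_ineq[of "x * (y - m)" "m * (x - m)"] by (simp add: abs_mult)
  also have "\<dots> \<le> a * \<bar>y - m\<bar> + a * \<bar>x - m\<bar>"
    using assms by (intro add_mono mult_right_mono) auto
  finally show ?thesis by (simp add: algebra_simps)
qed

lemma exp_minus_diff_le: "0 \<le> a \<Longrightarrow> a \<le> b \<Longrightarrow> exp (- a) - exp (- b) \<le> b - (a :: real)"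
proof -
  assume "0 \<le> a" "a \<le> b"
  have "exp (- a) - exp (- b) = exp (- a) * (1 - exp (- (b - a)))" by (simp add: algebra_simps flip: exp_add)
  also have "\<dots> \<le> 1 * (b - a)"
  proof (rule mult_mono)
    show "1 - exp (- (b - a)) \<le> b - a" using exp_ge_add_one_self[of "- (b - a)"] by linarith
    show "exp (- a) \<le> 1" using \<open>0 \<le> a\<close> by simp
  qed (use \<open>a \<le> b\<close> in auto)
  finally show ?thesis by simp
qed

lemma dist_Pair_le_sum_abs: "dist (a, b) (c, d) \<le> \<bar>a - c\<bar> + \<bar>b - d\<bar>" for a b c d :: real
  using sqrt_sum_squares_le_sum_abs[of "a - c" "b - d"] by (simp add: dist_Pair_Pair dist_real_def)

lemma case_option_Collect_subset:
  assumes "\<And>x t. f x = Some t \<Longrightarrow> P x t \<Longrightarrow> x \<in> B" "\<And>x. f x = None \<Longrightarrow> x \<in> B"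
  shows "{x. case f x of None \<Rightarrow> True | Some t \<Rightarrow> P x t} \<subseteq> B"
proof
  fix x assume "x \<in> {x. case f x of None \<Rightarrow> True | Some t \<Rightarrow> P x t}"
  then show "x \<in> B" using assms by (cases "f x") auto
qed

lemma scaled_floor_window:
  assumes "0 < K" "0 \<le> a" "0 \<le> b" "nat \<lfloor>a * real K\<rfloor> < t" "t \<le> nat \<lfloor>b * real K\<rfloor>"
  shows "a \<le> real t / real K" "real t / real K \<le> b"
proof -
  have "a * real K - 1 < real (nat \<lfloor>a * real K\<rfloor>)" "real (nat \<lfloor>b * real K\<rfloor>) \<le> b * real K"
    using assms by (simp_all add: of_nat_nat)
  moreover have "real (nat \<lfloor>a * real K\<rfloor>) + 1 \<le> real t" "real t \<le> real (nat \<lfloor>b * real K\<rfloor>)"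
    using assms(4,5) by linarith+
  ultimately have "a * real K \<le> real t" "real t \<le> b * real K" by linarith+
  then show "a \<le> real t / real K" "real t / real K \<le> b"
    using \<open>0 < K\<close> by (simp_all add: pos_le_divide_eq pos_divide_le_eq)
qed

section \<open>Valid states and the law of one step\<close>

definition ic_valid :: "nat \<Rightarrow> nat \<Rightarrow> ic_state \<Rightarrow> bool" where
  "ic_valid K n s \<longleftrightarrow> (case s of (R, C, Gr, Psi) \<Rightarrow>
     1 \<le> R \<and> R \<le> K \<and> 1 \<le> C \<and> C \<le> K \<and> Gr \<subseteq> {1..R} \<times> {1..C} \<and>
     {p. Psi p \<noteq> 0} \<subseteq> {1..R} \<times> {1..C} \<and> card {p. Psi p \<noteq> 0} = n)"

definition free_cells :: "nat \<Rightarrow> nat \<Rightarrow> (nat \<times> nat \<Rightarrow> nat) \<Rightarrow> (nat \<times> nat) set" where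
  "free_cells K R Psi = {(x, y). x \<in> {1..R} \<and> y \<in> {1..K} \<and> Psi (x, y) = 0}"

definition ic_rate :: "nat \<Rightarrow> nat \<Rightarrow> real" where
  "ic_rate K n = real K / (real K ^ 2 - real n)"

definition new_col_prob :: "nat \<Rightarrow> nat \<Rightarrow> real" where
  "new_col_prob K C = (real K - real C) / real K"

(* Among the R K - n free cells of the first R rows, R (K - C) lie outside the first C columns. *)
definition free_new_col_prob :: "nat \<Rightarrow> nat \<Rightarrow> nat \<Rightarrow> nat \<Rightarrow> real" where
  "free_new_col_prob K n R C = real R * (real K - real C) / (real R * real K - real n)"

definition new_row_step :: "nat \<Rightarrow> nat \<Rightarrow> ic_state \<Rightarrow> ic_state pmf" where
  "new_row_step K n s = (case s of (R, C, Gr, Psi) \<Rightarrow>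
     bind_pmf (bernoulli_pmf (new_col_prob K C)) (\<lambda>newcol.
       if newcol then return_pmf (R + 1, C + 1, insert (R + 1, C + 1) Gr, Psi((R + 1, C + 1) := n + 1))
       else bind_pmf (pmf_of_set {1..C}) (\<lambda>Z. return_pmf (R + 1, C, Gr, Psi((R + 1, Z) := n + 1)))))"

definition old_row_step :: "nat \<Rightarrow> nat \<Rightarrow> ic_state \<Rightarrow> ic_state pmf" where
  "old_row_step K n s = (case s of (R, C, Gr, Psi) \<Rightarrow>
     bind_pmf (pmf_of_set (free_cells K R Psi)) (\<lambda>(X, Y).
       if Y > C then return_pmf (R, C + 1, Gr, Psi((X, C + 1) := n + 1))
       else return_pmf (R, C, Gr, Psi((X, Y) := n + 1))))"

lemma ic_step_split:
  "ic_step K n (R, C, Gr, Psi) =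
     bind_pmf (bernoulli_pmf ((real K - real R) * ic_rate K n)) (\<lambda>newrow.
       if newrow then new_row_step K n (R, C, Gr, Psi) else old_row_step K n (R, C, Gr, Psi))"
  unfolding ic_step_def new_row_step_def old_row_step_def free_cells_def new_col_prob_def ic_rate_def
  by (simp only: prod.case times_divide_eq_right)

lemma ic_rate_le_1: "n + K \<le> K ^ 2 \<Longrightarrow> 1 \<le> K \<Longrightarrow> 0 < ic_rate K n \<and> ic_rate K n \<le> 1"
proof -
  assume "n + K \<le> K ^ 2" "1 \<le> K"
  then have "real K \<le> real K ^ 2 - real n" "0 < real K" by (simp_all flip: of_nat_add of_nat_power)
  then have "0 < real K ^ 2 - real n" by linarith
  with \<open>real K \<le> real K ^ 2 - real n\<close> \<open>0 < real K\<close> show ?thesis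
    by (simp add: ic_rate_def pos_divide_le_eq)
qed

lemma ic_valid_filled_le:
  assumes "ic_valid K n (R, C, Gr, Psi)"
  shows "n \<le> R * C"
proof -
  have "n = card {p. Psi p \<noteq> 0}" using assms by (simp add: ic_valid_def)
  also have "\<dots> \<le> card ({1..R} \<times> {1..C})" using assms by (intro card_mono) (auto simp: ic_valid_def)
  finally show ?thesis by simp
qed

lemma ic_valid_filled_le_rows:
  assumes "ic_valid K n (R, C, Gr, Psi)"
  shows "n \<le> R * K"
proof -
  have "C \<le> K" using assms by (simp add: ic_valid_def)
  then show ?thesis using ic_valid_filled_le[OF assms] mult_le_mono2[of C K R] by linarith
qed

lemma finite_free_cells: "finite (free_cells K R Psi)"
  by (rule finite_subset[of _ "{1..R} \<times> {1..K}"]) (auto simp: free_cells_def)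

lemma card_free_cells:
  assumes "ic_valid K n (R, C, Gr, Psi)"
  shows "card (free_cells K R Psi) = R * K - n"
proof -
  have sub: "{p. Psi p \<noteq> 0} \<subseteq> {1..R} \<times> {1..K}" using assms by (force simp: ic_valid_def)
  have "free_cells K R Psi = {1..R} \<times> {1..K} - {p. Psi p \<noteq> 0}" by (auto simp: free_cells_def)
  then have "card (free_cells K R Psi) = card ({1..R} \<times> {1..K}) - card {p. Psi p \<noteq> 0}"
    using sub by (simp add: card_Diff_subset finite_subset)
  then show ?thesis using assms by (simp add: ic_valid_def)
qed

lemma free_cells_new_col:
  assumes "ic_valid K n (R, C, Gr, Psi)"
  shows "free_cells K R Psi \<inter> {p. C < snd p} = {1..R} \<times> {C + 1..K}"
  using assms by (auto simp: free_cells_def ic_valid_def)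

lemma free_cells_nonempty:
  assumes valid: "ic_valid K n (R, C, Gr, Psi)" and "n < K ^ 2"
    and "(real K - real R) * ic_rate K n < 1"
  shows "free_cells K R Psi \<noteq> {}"
proof
  assume "free_cells K R Psi = {}"
  then have "R * K \<le> n" using card_free_cells[OF valid] by simp
  moreover have "n \<le> R * K" by (rule ic_valid_filled_le_rows[OF valid])
  ultimately have n: "n = R * K" by simp
  with \<open>n < K ^ 2\<close> have "R < K" by (auto simp: power2_eq_square)
  have "real K ^ 2 - real n = (real K - real R) * real K"
    using n by (simp add: power2_eq_square algebra_simps)
  then show False using assms \<open>R < K\<close> by (simp add: ic_rate_def)
qed

definition ic_succ :: "ic_state \<Rightarrow> ic_state \<Rightarrow> bool" where
  "ic_succ s s' \<longleftrightarrow> ic_R s \<le> ic_R s' \<and> ic_R s' \<le> ic_R s + 1 \<and> ic_C s \<le> ic_C s' \<and> ic_C s' \<le> ic_C s + 1 \<and>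
     ic_G s \<le> ic_G s' \<and> ic_G s' \<le> ic_G s + 1"

lemma ic_valid_fill:
  assumes valid: "ic_valid K n (R, C, Gr, Psi)"
    and "R \<le> R'" "R' \<le> K" "C \<le> C'" "C' \<le> K" "Gr' \<subseteq> {1..R'} \<times> {1..C'}"
    and q: "q \<in> {1..R'} \<times> {1..C'}" "Psi q = 0"
  shows "ic_valid K (Suc n) (R', C', Gr', Psi(q := Suc n))"
proof -
  have filled: "{p. (Psi(q := Suc n)) p \<noteq> 0} = insert q {p. Psi p \<noteq> 0}" by auto
  have sub: "{p. Psi p \<noteq> 0} \<subseteq> {1..R} \<times> {1..C}" and card: "card {p. Psi p \<noteq> 0} = n"
    and "1 \<le> R" "1 \<le> C" using valid by (auto simp: ic_valid_def)
  moreover have "finite {p. Psi p \<noteq> 0}" using sub by (rule finite_subset) simp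
  moreover have "{1..R} \<times> {1..C} \<subseteq> {1..R'} \<times> {1..C'}" using assms by auto
  ultimately show ?thesis using assms unfolding ic_valid_def prod.case filled by auto
qed

lemma ic_valid_finite_green: "ic_valid K n (R, C, Gr, Psi) \<Longrightarrow> finite Gr"
  by (auto simp: ic_valid_def intro: finite_subset)

lemma set_pmf_new_row_step:
  assumes valid: "ic_valid K n (R, C, Gr, Psi)" and "R < K"
    and s': "s' \<in> set_pmf (new_row_step K n (R, C, Gr, Psi))"
  shows "ic_valid K (Suc n) s' \<and> ic_succ (R, C, Gr, Psi) s'"
proof -
  have C: "1 \<le> C" "C \<le> K" and Gr: "Gr \<subseteq> {1..R} \<times> {1..C}" "finite Gr"
    and free: "\<And>p. p \<notin> {1..R} \<times> {1..C} \<Longrightarrow> Psi p = 0"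
    using valid ic_valid_finite_green[OF valid] by (auto simp: ic_valid_def)
  from s' obtain newcol where nc: "newcol \<in> set_pmf (bernoulli_pmf (new_col_prob K C))"
    and s'': "s' \<in> set_pmf (if newcol then
        return_pmf (R + 1, C + 1, insert (R + 1, C + 1) Gr, Psi((R + 1, C + 1) := n + 1))
      else bind_pmf (pmf_of_set {1..C}) (\<lambda>Z. return_pmf (R + 1, C, Gr, Psi((R + 1, Z) := n + 1))))"
    by (auto simp: new_row_step_def)
  show ?thesis
  proof (cases newcol)
    case True
    with nc have "C < K"
      by (auto dest!: set_pmf_bernoulli_TrueD simp: new_col_prob_def zero_less_divide_iff)
    moreover have "s' = (R + 1, C + 1, insert (R + 1, C + 1) Gr, Psi((R + 1, C + 1) := Suc n))"
      using s'' True by simp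
    moreover have "(R + 1, C + 1) \<notin> Gr" using Gr by auto
    ultimately show ?thesis using \<open>R < K\<close> C Gr free[of "(R + 1, C + 1)"]
      by (auto simp: ic_succ_def ic_R_def ic_C_def ic_G_def intro!: ic_valid_fill[OF valid])
  next
    case False
    with s'' C obtain Z where "Z \<in> {1..C}" and "s' = (R + 1, C, Gr, Psi((R + 1, Z) := Suc n))"
      by auto
    then show ?thesis using \<open>R < K\<close> C Gr free[of "(R + 1, Z)"]
      by (auto simp: ic_succ_def ic_R_def ic_C_def ic_G_def intro!: ic_valid_fill[OF valid])
  qed
qed

lemma set_pmf_old_row_step:
  assumes valid: "ic_valid K n (R, C, Gr, Psi)" and ne: "free_cells K R Psi \<noteq> {}"
    and s': "s' \<in> set_pmf (old_row_step K n (R, C, Gr, Psi))"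
  shows "ic_valid K (Suc n) s' \<and> ic_succ (R, C, Gr, Psi) s'"
proof -
  have "C \<le> K" "R \<le> K" and Gr: "Gr \<subseteq> {1..R} \<times> {1..C}"
    and free: "\<And>p. p \<notin> {1..R} \<times> {1..C} \<Longrightarrow> Psi p = 0"
    using valid by (auto simp: ic_valid_def)
  from s' obtain X Y where XY: "(X, Y) \<in> free_cells K R Psi"
    and s'': "s' \<in> set_pmf (if Y > C then return_pmf (R, C + 1, Gr, Psi((X, C + 1) := n + 1))
                           else return_pmf (R, C, Gr, Psi((X, Y) := n + 1)))"
    using ne finite_free_cells by (auto simp: old_row_step_def)
  have X: "X \<in> {1..R}" and Y: "Y \<in> {1..K}" "Psi (X, Y) = 0" using XY by (auto simp: free_cells_def)
  show ?thesis
  proof (cases "Y > C")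
    case True
    then have "s' = (R, C + 1, Gr, Psi((X, C + 1) := Suc n))" using s'' by simp
    then show ?thesis using True X Y \<open>R \<le> K\<close> Gr free[of "(X, C + 1)"]
      by (auto simp: ic_succ_def ic_R_def ic_C_def ic_G_def intro!: ic_valid_fill[OF valid])
  next
    case False
    then have "s' = (R, C, Gr, Psi((X, Y) := Suc n))" using s'' by simp
    then show ?thesis using False X Y \<open>R \<le> K\<close> \<open>C \<le> K\<close> Gr
      by (auto simp: ic_succ_def ic_R_def ic_C_def ic_G_def intro!: ic_valid_fill[OF valid])
  qed
qed

lemma line_prob_bounds:
  assumes valid: "ic_valid K n s" and "n < K ^ 2" and F: "F = ic_R \<or> F = ic_C"
  shows "0 \<le> (real K - real (F s)) * ic_rate K n" "(real K - real (F s)) * ic_rate K n \<le> 1"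
proof -
  obtain R C Gr Psi where s: "s = (R, C, Gr, Psi)" by (cases s)
  have D: "0 < real K ^ 2 - real n" using \<open>n < K ^ 2\<close> by (simp add: of_nat_less_iff[symmetric])
  have "R \<le> K" "C \<le> K" "n \<le> R * C" using valid ic_valid_filled_le by (auto simp: s ic_valid_def)
  then have "n \<le> R * K" "n \<le> K * C" by (metis mult_le_mono2 order_trans, metis mult_le_mono1 order_trans)
  with F \<open>R \<le> K\<close> \<open>C \<le> K\<close> have "F s \<le> K" "n \<le> F s * K" by (auto simp: s ic_R_def ic_C_def mult.commute)
  then have "real n \<le> real (F s) * real K" "real (F s) \<le> real K" by (simp_all flip: of_nat_mult)
  then have "(real K - real (F s)) * real K \<le> real K ^ 2 - real n"
    by (simp add: power2_eq_square algebra_simps)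
  then show "(real K - real (F s)) * ic_rate K n \<le> 1"
    using D by (simp add: ic_rate_def pos_divide_le_eq)
  show "0 \<le> (real K - real (F s)) * ic_rate K n"
    using D \<open>real (F s) \<le> real K\<close> by (simp add: ic_rate_def)
qed

lemma set_pmf_ic_step_cases:
  assumes valid: "ic_valid K n (R, C, Gr, Psi)" and "n < K ^ 2"
    and s': "s' \<in> set_pmf (ic_step K n (R, C, Gr, Psi))"
  shows "R < K \<and> s' \<in> set_pmf (new_row_step K n (R, C, Gr, Psi)) \<or>
         free_cells K R Psi \<noteq> {} \<and> s' \<in> set_pmf (old_row_step K n (R, C, Gr, Psi))"
proof -
  from s' obtain newrow where nr: "newrow \<in> set_pmf (bernoulli_pmf ((real K - real R) * ic_rate K n))"
    and s'': "s' \<in> set_pmf (if newrow then new_row_step K n (R, C, Gr, Psi) else old_row_step K n (R, C, Gr, Psi))"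
    by (auto simp: ic_step_split)
  show ?thesis
  proof (cases newrow)
    case True
    have "R \<le> K" using valid by (simp add: ic_valid_def)
    with nr True have "R < K" by (auto dest!: set_pmf_bernoulli_TrueD simp: zero_less_mult_iff)
    then show ?thesis using s'' True by simp
  next
    case False
    with nr have "(real K - real R) * ic_rate K n < 1" by (auto dest: set_pmf_bernoulli_FalseD)
    then have "free_cells K R Psi \<noteq> {}" by (rule free_cells_nonempty[OF valid \<open>n < K ^ 2\<close>])
    then show ?thesis using s'' False by simp
  qed
qed

lemma set_pmf_ic_step:
  assumes "ic_valid K n s" "n < K ^ 2" "s' \<in> set_pmf (ic_step K n s)"
  shows "ic_valid K (Suc n) s' \<and> ic_succ s s'"
  using assms set_pmf_ic_step_cases[of K n] set_pmf_new_row_step[of K n] set_pmf_old_row_step[of K n]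
  by (cases s) blast

lemma finite_set_pmf_new_row_step:
  "1 \<le> C \<Longrightarrow> finite (set_pmf (new_row_step K n (R, C, Gr, Psi)))"
  by (auto simp: new_row_step_def intro!: finite_UN_I)

lemma finite_set_pmf_old_row_step:
  "free_cells K R Psi \<noteq> {} \<Longrightarrow> finite (set_pmf (old_row_step K n (R, C, Gr, Psi)))"
  using finite_free_cells[of K R Psi] by (auto simp: old_row_step_def split: prod.splits intro!: finite_UN_I)

lemma finite_set_pmf_ic_step:
  assumes valid: "ic_valid K n (R, C, Gr, Psi)" and "n < K ^ 2"
  shows "finite (set_pmf (ic_step K n (R, C, Gr, Psi)))"
proof (rule finite_subset)
  show "set_pmf (ic_step K n (R, C, Gr, Psi)) \<subseteq> set_pmf (new_row_step K n (R, C, Gr, Psi)) \<union>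
     (if free_cells K R Psi = {} then {} else set_pmf (old_row_step K n (R, C, Gr, Psi)))"
    using set_pmf_ic_step_cases[OF assms] by auto
  have "1 \<le> C" using valid by (simp add: ic_valid_def)
  then show "finite (set_pmf (new_row_step K n (R, C, Gr, Psi)) \<union>
     (if free_cells K R Psi = {} then {} else set_pmf (old_row_step K n (R, C, Gr, Psi))))"
    by (simp add: finite_set_pmf_new_row_step finite_set_pmf_old_row_step)
qed

lemma new_col_prob_bounds: "C \<le> K \<Longrightarrow> 0 \<le> new_col_prob K C \<and> new_col_prob K C \<le> 1"
  by (cases "K = 0") (auto simp: new_col_prob_def field_simps)

lemma expectation_new_row_step:
  assumes valid: "ic_valid K n (R, C, Gr, Psi)"
  shows "measure_pmf.expectation (new_row_step K n (R, C, Gr, Psi)) (\<lambda>s. h (ic_R s) (ic_C s) (ic_G s)) =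
     new_col_prob K C * h (R + 1) (C + 1) (card Gr + 1) + (1 - new_col_prob K C) * h (R + 1) C (card Gr)"
proof -
  have C: "1 \<le> C" "C \<le> K" and Gr: "(R + 1, C + 1) \<notin> Gr" "finite Gr"
    using valid ic_valid_finite_green[OF valid] by (auto simp: ic_valid_def)
  show ?thesis
    unfolding new_row_step_def prod.case
    using C Gr new_col_prob_bounds[OF C(2)]
    by (subst expectation_bind_pmf_finite)
       (auto simp: finite_set_pmf_bool map_pmf_def[symmetric] ic_R_def ic_C_def ic_G_def algebra_simps)
qed

lemma expectation_old_row_step:
  assumes valid: "ic_valid K n (R, C, Gr, Psi)" and ne: "free_cells K R Psi \<noteq> {}"
  shows "measure_pmf.expectation (old_row_step K n (R, C, Gr, Psi)) (\<lambda>s. h (ic_R s) (ic_C s) (ic_G s)) =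
     free_new_col_prob K n R C * h R (C + 1) (card Gr) + (1 - free_new_col_prob K n R C) * h R C (card Gr)"
proof -
  define S where "S = free_cells K R Psi"
  define A where "A = S \<inter> {p. C < snd p}"
  define h1 where "h1 = h R (C + 1) (card Gr)"
  define h0 where "h0 = h R C (card Gr)"
  have fin: "finite S" by (simp add: S_def finite_free_cells)
  have neS: "S \<noteq> {}" using ne by (simp add: S_def)
  have branch: "measure_pmf.expectation (case p of (X, Y) \<Rightarrow>
         if Y > C then return_pmf (R, C + 1, Gr, Psi((X, C + 1) := n + 1))
         else return_pmf (R, C, Gr, Psi((X, Y) := n + 1))) (\<lambda>s. h (ic_R s) (ic_C s) (ic_G s))
      = (if C < snd p then h1 else h0)" for p
    by (simp add: h1_def h0_def ic_R_def ic_C_def ic_G_def split: prod.split)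
  have "measure_pmf.expectation (old_row_step K n (R, C, Gr, Psi)) (\<lambda>s. h (ic_R s) (ic_C s) (ic_G s)) =
      measure_pmf.expectation (pmf_of_set S) (\<lambda>p. if C < snd p then h1 else h0)"
    unfolding old_row_step_def prod.case S_def[symmetric] using ne fin
    by (subst expectation_bind_pmf_finite) (auto simp: S_def branch split: prod.splits)
  also have "\<dots> = (card A * h1 + card (S - {p. C < snd p}) * h0) / card S"
    using fin by (simp add: integral_pmf_of_set[OF neS fin] sum.If_cases A_def Diff_eq)
  also have "\<dots> = free_new_col_prob K n R C * h1 + (1 - free_new_col_prob K n R C) * h0"
  proof -
    have "C \<le> K" using valid by (simp add: ic_valid_def)
    have "A = {1..R} \<times> {C + 1..K}" unfolding A_def S_def by (rule free_cells_new_col[OF valid])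
    then have cA: "real (card A) = real R * (real K - real C)" using \<open>C \<le> K\<close> by (simp add: of_nat_diff)
    have cS: "real (card S) = real R * real K - real n"
      using card_free_cells[OF valid] ic_valid_filled_le_rows[OF valid] by (simp add: S_def of_nat_diff)
    have diff: "real (card (S - {p. C < snd p})) = real (card S) - real (card A)"
      using fin by (simp add: A_def card_Diff_subset_Int of_nat_diff card_mono)
    have "real (card S) \<noteq> 0" using neS fin by simp
    moreover have "free_new_col_prob K n R C = real (card A) / real (card S)"
      using cA cS by (simp add: free_new_col_prob_def)
    ultimately show ?thesis unfolding diff by (simp add: field_simps)
  qed
  finally show ?thesis by (simp add: h1_def h0_def)
qed

lemma expectation_ic_step:
  assumes valid: "ic_valid K n (R, C, Gr, Psi)" and "n < K ^ 2"
  shows "measure_pmf.expectation (ic_step K n (R, C, Gr, Psi)) (\<lambda>s. h (ic_R s) (ic_C s) (ic_G s)) =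
    (real K - real R) * ic_rate K n *
      (new_col_prob K C * h (R + 1) (C + 1) (card Gr + 1) + (1 - new_col_prob K C) * h (R + 1) C (card Gr))
    + (1 - (real K - real R) * ic_rate K n) *
      (free_new_col_prob K n R C * h R (C + 1) (card Gr) + (1 - free_new_col_prob K n R C) * h R C (card Gr))"
proof -
  let ?p = "(real K - real R) * ic_rate K n"
  let ?H = "\<lambda>s. h (ic_R s) (ic_C s) (ic_G s)"
  have C: "1 \<le> C" using valid by (simp add: ic_valid_def)
  have p: "0 \<le> ?p" "?p \<le> 1"
    using line_prob_bounds[OF valid \<open>n < K ^ 2\<close>, of ic_R] by (simp_all add: ic_R_def)
  have "measure_pmf.expectation (ic_step K n (R, C, Gr, Psi)) ?H =
    measure_pmf.expectation (bernoulli_pmf ?p) (\<lambda>newrow. measure_pmf.expectation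
      (if newrow then new_row_step K n (R, C, Gr, Psi) else old_row_step K n (R, C, Gr, Psi)) ?H)"
    unfolding ic_step_split
  proof (rule expectation_bind_pmf_finite[OF finite_set_pmf_bool])
    fix newrow assume nr: "newrow \<in> set_pmf (bernoulli_pmf ?p)"
    show "finite (set_pmf (if newrow then new_row_step K n (R, C, Gr, Psi) else old_row_step K n (R, C, Gr, Psi)))"
    proof (cases newrow)
      case False
      with nr have "?p < 1" by (auto dest: set_pmf_bernoulli_FalseD)
      then show ?thesis using False free_cells_nonempty[OF assms] finite_set_pmf_old_row_step by simp
    qed (simp add: finite_set_pmf_new_row_step[OF C])
  qed
  also have "\<dots> = ?p * measure_pmf.expectation (new_row_step K n (R, C, Gr, Psi)) ?H
      + (1 - ?p) * measure_pmf.expectation (old_row_step K n (R, C, Gr, Psi)) ?H"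
    using p by simp
  finally have split: "measure_pmf.expectation (ic_step K n (R, C, Gr, Psi)) ?H =
      ?p * measure_pmf.expectation (new_row_step K n (R, C, Gr, Psi)) ?H
      + (1 - ?p) * measure_pmf.expectation (old_row_step K n (R, C, Gr, Psi)) ?H" .
  show ?thesis
  proof (cases "?p < 1")
    case True
    then show ?thesis using split free_cells_nonempty[OF assms True]
      by (simp add: expectation_new_row_step[OF valid] expectation_old_row_step[OF valid])
  next
    case False
    with p have "?p = 1" by simp
    then show ?thesis using split by (simp add: expectation_new_row_step[OF valid])
  qed
qed

(* This is why the column count evolves exactly like the row count. *)
lemma new_col_prob_total:
  assumes valid: "ic_valid K n (R, C, Gr, Psi)" and "n < K ^ 2"
  shows "(real K - real R) * ic_rate K n * new_col_prob K C
       + (1 - (real K - real R) * ic_rate K n) * free_new_col_prob K n R C = (real K - real C) * ic_rate K n"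
proof (cases "R * K = n")
  case True
  have "R * K \<le> R * C" "1 \<le> R" "C \<le> K" using True ic_valid_filled_le[OF valid] valid by (auto simp: ic_valid_def)
  then have "C = K" by simp
  then show ?thesis using True by (simp add: new_col_prob_def free_new_col_prob_def)
next
  case False
  have D: "real K ^ 2 - real n \<noteq> 0" using \<open>n < K ^ 2\<close> by (simp add: of_nat_less_iff[symmetric])
  have E: "real R * real K - real n \<noteq> 0" using False by (simp flip: of_nat_mult)
  have "real K \<noteq> 0" using valid by (simp add: ic_valid_def)
  then have new: "(real K - real R) * ic_rate K n * new_col_prob K C
      = (real K - real R) * (real K - real C) / (real K ^ 2 - real n)"
    by (simp add: ic_rate_def new_col_prob_def)
  have "1 - (real K - real R) * ic_rate K n = (real R * real K - real n) / (real K ^ 2 - real n)"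
    using D by (simp add: ic_rate_def field_simps power2_eq_square)
  then have old: "(1 - (real K - real R) * ic_rate K n) * free_new_col_prob K n R C
      = real R * (real K - real C) / (real K ^ 2 - real n)"
    using E by (simp add: free_new_col_prob_def)
  show ?thesis unfolding new old
    by (simp add: ic_rate_def add_divide_distrib[symmetric] algebra_simps)
qed

lemma expectation_ic_step_lines:
  assumes valid: "ic_valid K n s" and "n < K ^ 2" and F: "F = ic_R \<or> F = ic_C"
  shows "measure_pmf.expectation (ic_step K n s) (\<lambda>s'. f (F s')) =
    (real K - real (F s)) * ic_rate K n * f (F s + 1) + (1 - (real K - real (F s)) * ic_rate K n) * f (F s)"
proof -
  obtain R C Gr Psi where s: "s = (R, C, Gr, Psi)" by (cases s)
  note step = expectation_ic_step[OF valid[unfolded s] \<open>n < K ^ 2\<close>]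
  from F show ?thesis
  proof
    assume "F = ic_R"
    then show ?thesis using step[of "\<lambda>a b c. f a"] by (simp add: s ic_R_def algebra_simps)
  next
    assume "F = ic_C"
    let ?p = "(real K - real R) * ic_rate K n"
    have "measure_pmf.expectation (ic_step K n s) (\<lambda>s'. f (F s')) =
        ?p * (new_col_prob K C * f (C + 1) + (1 - new_col_prob K C) * f C)
        + (1 - ?p) * (free_new_col_prob K n R C * f (C + 1) + (1 - free_new_col_prob K n R C) * f C)"
      using step[of "\<lambda>a b c. f b"] by (simp add: s \<open>F = ic_C\<close> ic_C_def)
    also have "\<dots> = (?p * new_col_prob K C + (1 - ?p) * free_new_col_prob K n R C) * f (C + 1)
        + (1 - (?p * new_col_prob K C + (1 - ?p) * free_new_col_prob K n R C)) * f C"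
      by (simp add: algebra_simps)
    finally show ?thesis
      by (simp add: s \<open>F = ic_C\<close> ic_C_def new_col_prob_total[OF valid[unfolded s] \<open>n < K ^ 2\<close>])
  qed
qed

definition green_prob :: "nat \<Rightarrow> nat \<Rightarrow> ic_state \<Rightarrow> real" where
  "green_prob K n s = (real K - real (ic_R s)) * (real K - real (ic_C s)) / (real K ^ 2 - real n)"

lemma green_prob_eq:
  assumes "ic_valid K n s"
  shows "green_prob K n s = (real K - real (ic_R s)) * ic_rate K n * new_col_prob K (ic_C s)"
proof -
  have "real K \<noteq> 0" using assms by (cases s) (simp add: ic_valid_def)
  then show ?thesis by (simp add: green_prob_def ic_rate_def new_col_prob_def)
qed

lemma green_prob_bounds:
  assumes valid: "ic_valid K n s" and "n < K ^ 2"
  shows "0 \<le> green_prob K n s" "green_prob K n s \<le> 1"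
proof -
  have row: "0 \<le> (real K - real (ic_R s)) * ic_rate K n" "(real K - real (ic_R s)) * ic_rate K n \<le> 1"
    using line_prob_bounds[OF valid \<open>n < K ^ 2\<close>, of ic_R] by simp_all
  have "ic_C s \<le> K" using valid by (cases s) (simp add: ic_valid_def ic_C_def)
  then have col: "0 \<le> new_col_prob K (ic_C s)" "new_col_prob K (ic_C s) \<le> 1"
    using new_col_prob_bounds by simp_all
  show "0 \<le> green_prob K n s" "green_prob K n s \<le> 1"
    unfolding green_prob_eq[OF valid] using mult_le_one[OF row(2) col(1,2)] row(1) col(1) by simp_all
qed

lemma expectation_ic_step_green:
  assumes valid: "ic_valid K n s" and "n < K ^ 2"
  shows "measure_pmf.expectation (ic_step K n s) (\<lambda>s'. f (ic_G s')) =
    green_prob K n s * f (ic_G s + 1) + (1 - green_prob K n s) * f (ic_G s)"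
proof -
  obtain R C Gr Psi where s: "s = (R, C, Gr, Psi)" by (cases s)
  let ?p = "(real K - real R) * ic_rate K n"
  have "measure_pmf.expectation (ic_step K n s) (\<lambda>s'. f (ic_G s')) =
      ?p * (new_col_prob K C * f (card Gr + 1) + (1 - new_col_prob K C) * f (card Gr))
      + (1 - ?p) * (free_new_col_prob K n R C * f (card Gr) + (1 - free_new_col_prob K n R C) * f (card Gr))"
    using expectation_ic_step[OF valid[unfolded s] \<open>n < K ^ 2\<close>, of "\<lambda>a b c. f c"] by (simp only: s)
  also have "\<dots> = ?p * new_col_prob K C * f (card Gr + 1) + (1 - ?p * new_col_prob K C) * f (card Gr)"
    by (simp add: algebra_simps)
  finally show ?thesis using green_prob_eq[OF valid] by (simp add: s ic_G_def ic_R_def ic_C_def)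
qed

section \<open>Trajectories\<close>

definition ic_path :: "nat \<Rightarrow> nat \<Rightarrow> ic_state list \<Rightarrow> bool" where
  "ic_path K n xs \<longleftrightarrow> length xs = Suc n \<and> xs ! 0 = ic_state0 \<and> (\<forall>u\<in>{1..n}. ic_valid K u (xs ! u)) \<and>
     (\<forall>u<n. ic_succ (xs ! u) (xs ! Suc u))"

lemma ic_traj_One: "ic_traj K 1 = return_pmf [ic_state0, ic_state1]"
  by (simp add: One_nat_def)

lemma length_ic_traj: "xs \<in> set_pmf (ic_traj K n) \<Longrightarrow> length xs = Suc n"
  by (induction K n arbitrary: xs rule: ic_traj.induct) auto

lemma last_ic_traj: "xs \<in> set_pmf (ic_traj K n) \<Longrightarrow> last xs = xs ! n"
  using length_ic_traj[of xs K n] by (cases xs rule: rev_cases) auto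

lemma ic_traj_path: "n \<le> K ^ 2 \<Longrightarrow> xs \<in> set_pmf (ic_traj K n) \<Longrightarrow> ic_path K n xs"
proof (induction K n arbitrary: xs rule: ic_traj.induct)
  case (1 K)
  then show ?case by (simp add: ic_path_def)
next
  case (2 K)
  then have "1 \<le> K" by (cases K) auto
  moreover have "{p. ((\<lambda>_. 0)((1::nat, 1::nat) := 1::nat)) p \<noteq> 0} = {(1, 1)}" by auto
  ultimately show ?case using 2
    by (auto simp: ic_path_def ic_valid_def ic_succ_def ic_state0_def ic_state1_def ic_R_def ic_C_def ic_G_def)
next
  case (3 K n)
  then obtain ys s where xs: "xs = ys @ [s]" and ys: "ys \<in> set_pmf (ic_traj K (Suc n))"
    and s: "s \<in> set_pmf (ic_step K (Suc n) (last ys))" by auto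
  have path: "ic_path K (Suc n) ys" using 3 ys by simp
  then have len: "length ys = Suc (Suc n)" by (simp add: ic_path_def)
  have "last ys = ys ! Suc n" using last_ic_traj[OF ys] .
  moreover have "ic_valid K (Suc n) (ys ! Suc n)" using path by (simp add: ic_path_def)
  ultimately have "ic_valid K (Suc (Suc n)) s \<and> ic_succ (ys ! Suc n) s"
    using set_pmf_ic_step 3(2) s by simp
  with path len show ?case
    by (auto simp: xs ic_path_def nth_append less_Suc_eq le_Suc_eq)
qed

lemma finite_set_pmf_ic_traj: "n \<le> K ^ 2 \<Longrightarrow> finite (set_pmf (ic_traj K n))"
proof (induction K n rule: ic_traj.induct)
  case (3 K n)
  have "finite (set_pmf (ic_step K (Suc n) (last ys)))" if ys: "ys \<in> set_pmf (ic_traj K (Suc n))" for ys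
  proof -
    have "ic_path K (Suc n) ys" using ic_traj_path 3(2) ys by simp
    then have "ic_valid K (Suc n) (last ys)" by (simp add: ic_path_def last_ic_traj[OF ys])
    then show ?thesis using finite_set_pmf_ic_step 3(2) by (cases "last ys") simp
  qed
  then show ?case using 3 by (auto intro!: finite_UN_I)
qed simp_all

lemma finite_set_pmf_ic_full: "finite (set_pmf (ic_full K))"
  by (simp add: ic_full_def finite_set_pmf_ic_traj)

lemma expectation_ic_traj_Suc:
  fixes F :: "ic_state list \<Rightarrow> real"
  assumes "1 \<le> n" "n < K ^ 2"
  shows "measure_pmf.expectation (ic_traj K (Suc n)) F =
    measure_pmf.expectation (ic_traj K n) (\<lambda>xs. measure_pmf.expectation (ic_step K n (xs ! n)) (\<lambda>s. F (xs @ [s])))"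
proof -
  obtain m where m: "n = Suc m" using assms by (cases n) auto
  have fin: "finite (set_pmf (ic_step K n (xs ! n)))" if xs: "xs \<in> set_pmf (ic_traj K n)" for xs
  proof -
    have "ic_valid K n (xs ! n)" using ic_traj_path[OF _ xs] assms by (simp add: ic_path_def)
    then show ?thesis using finite_set_pmf_ic_step assms by (cases "xs ! n") simp
  qed
  have "measure_pmf.expectation (ic_traj K (Suc n)) F = measure_pmf.expectation (ic_traj K n)
      (\<lambda>xs. measure_pmf.expectation (map_pmf (\<lambda>s. xs @ [s]) (ic_step K n (last xs))) F)"
    unfolding m ic_traj.simps(3)
  proof (rule expectation_bind_pmf_finite)
    show "finite (set_pmf (ic_traj K (Suc m)))" using finite_set_pmf_ic_traj assms m by simp
    fix xs assume "xs \<in> set_pmf (ic_traj K (Suc m))"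
    then show "finite (set_pmf (map_pmf (\<lambda>s. xs @ [s]) (ic_step K (Suc m) (last xs))))"
      using fin[of xs] last_ic_traj[of xs K "Suc m"] m by simp
  qed
  also have "\<dots> = measure_pmf.expectation (ic_traj K n)
      (\<lambda>xs. measure_pmf.expectation (ic_step K n (xs ! n)) (\<lambda>s. F (xs @ [s])))"
    by (intro integral_cong_AE) (auto simp: AE_measure_pmf_iff last_ic_traj)
  finally show ?thesis .
qed

lemma map_pmf_take_ic_traj: "n \<le> m \<Longrightarrow> map_pmf (take (Suc n)) (ic_traj K m) = ic_traj K n"
proof (induction m)
  case (Suc m)
  show ?case
  proof (cases "n = Suc m")
    case True
    then have "map_pmf (take (Suc n)) (ic_traj K (Suc m)) = map_pmf id (ic_traj K (Suc m))"
      by (intro map_pmf_cong) (auto dest: length_ic_traj)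
    then show ?thesis using True by simp
  next
    case False
    then have "n \<le> m" using Suc.prems by simp
    show ?thesis
    proof (cases m)
      case (Suc m')
      have "map_pmf (take (Suc n)) (ic_traj K (Suc m)) = map_pmf (take (Suc n)) (ic_traj K m)"
        unfolding Suc ic_traj.simps(3) map_bind_pmf map_pmf_def[of "take (Suc n)" "ic_traj K (Suc m')"]
        using \<open>n \<le> m\<close> by (intro bind_pmf_cong) (auto simp: Suc pmf.map_comp o_def dest!: length_ic_traj)
      then show ?thesis using Suc.IH \<open>n \<le> m\<close> by simp
    qed (use \<open>n \<le> m\<close> in simp)
  qed
qed simp

lemma expectation_ic_traj_nth:
  fixes f :: "ic_state \<Rightarrow> real"
  assumes "j \<le> n"
  shows "measure_pmf.expectation (ic_traj K n) (\<lambda>xs. f (xs ! j)) =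
         measure_pmf.expectation (ic_traj K j) (\<lambda>xs. f (xs ! j))"
  by (simp flip: map_pmf_take_ic_traj[OF assms])

lemma ic_path_mono:
  assumes path: "ic_path K n xs" and "a \<le> b" "b \<le> n"
  shows "ic_R (xs ! a) \<le> ic_R (xs ! b) \<and> ic_C (xs ! a) \<le> ic_C (xs ! b) \<and> ic_G (xs ! a) \<le> ic_G (xs ! b)"
  using assms(2,3)
proof (induction b)
  case (Suc b)
  show ?case
  proof (cases "a = Suc b")
    case False
    then have "ic_R (xs ! a) \<le> ic_R (xs ! b) \<and> ic_C (xs ! a) \<le> ic_C (xs ! b) \<and> ic_G (xs ! a) \<le> ic_G (xs ! b)"
      using Suc by simp
    moreover have "ic_succ (xs ! b) (xs ! Suc b)" using path Suc.prems by (simp add: ic_path_def)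
    ultimately show ?thesis by (auto simp: ic_succ_def)
  qed simp
qed simp

lemma ic_path_green_hits:
  assumes path: "ic_path K n xs"
  shows "u \<le> n \<Longrightarrow> m \<le> ic_G (xs ! u) \<Longrightarrow> \<exists>v\<le>u. ic_G (xs ! v) = m"
proof (induction u)
  case 0
  have "ic_G (xs ! 0) = 0" using path by (simp add: ic_path_def ic_G_def ic_state0_def)
  then show ?case using 0 by auto
next
  case (Suc u)
  show ?case
  proof (cases "m \<le> ic_G (xs ! u)")
    case True
    then show ?thesis using Suc by (meson le_SucI Suc_leD)
  next
    case False
    moreover have "ic_succ (xs ! u) (xs ! Suc u)" using path Suc.prems by (simp add: ic_path_def)
    ultimately have "ic_G (xs ! Suc u) = m" using Suc.prems by (auto simp: ic_succ_def)
    then show ?thesis by blast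
  qed
qed

lemma ic_tau_between:
  assumes path: "ic_path K n xs" and "t1 \<le> n" "t2 \<le> n"
    and G: "ic_G (xs ! t1) < m" "m \<le> ic_G (xs ! t2)"
  shows "\<exists>t. ic_tau m xs = Some t \<and> t1 < t \<and> t \<le> t2"
proof -
  obtain v where v: "v \<le> t2" "ic_G (xs ! v) = m" using ic_path_green_hits[OF path \<open>t2 \<le> n\<close> G(2)] by blast
  have "length xs = Suc n" using path by (simp add: ic_path_def)
  with v \<open>t2 \<le> n\<close> have hit: "v < length xs \<and> ic_G (xs ! v) = m" by simp
  define t where "t = (LEAST t. t < length xs \<and> ic_G (xs ! t) = m)"
  have tau: "ic_tau m xs = Some t" using hit by (auto simp: ic_tau_def t_def)
  have "t \<le> v" unfolding t_def by (rule Least_le) (fact hit)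
  have "t < length xs \<and> ic_G (xs ! t) = m" unfolding t_def by (rule LeastI[of _ v]) (fact hit)
  have "t1 < t"
  proof (rule ccontr)
    assume "\<not> t1 < t"
    then have "ic_G (xs ! t) \<le> ic_G (xs ! t1)" using ic_path_mono[OF path _ \<open>t1 \<le> n\<close>, of t] by simp
    then show False using \<open>t < length xs \<and> ic_G (xs ! t) = m\<close> G(1) by simp
  qed
  then show ?thesis using tau \<open>t \<le> v\<close> v(1) by auto
qed

section \<open>Second moments\<close>

lemma ic_traj_second_moment_le:
  fixes Z :: "nat \<Rightarrow> ic_state list \<Rightarrow> real"
  assumes base: "(Z 1 [ic_state0, ic_state1])\<^sup>2 \<le> 1"
    and step: "\<And>n xs. 1 \<le> n \<Longrightarrow> n < N \<Longrightarrow> xs \<in> set_pmf (ic_traj K n) \<Longrightarrow>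
        measure_pmf.expectation (ic_step K n (xs ! n)) (\<lambda>s. (Z (Suc n) (xs @ [s]))\<^sup>2) \<le> (Z n xs)\<^sup>2 + 1"
    and "N \<le> K ^ 2" "1 \<le> n" "n \<le> N"
  shows "measure_pmf.expectation (ic_traj K n) (\<lambda>xs. (Z n xs)\<^sup>2) \<le> n"
  using \<open>1 \<le> n\<close> \<open>n \<le> N\<close>
proof (induction n rule: nat_induct_at_least)
  case base
  then show ?case using assms(1) by (simp add: ic_traj_One)
next
  case (Suc n)
  have n: "n < K ^ 2" using Suc \<open>N \<le> K ^ 2\<close> by simp
  have fin: "finite (set_pmf (ic_traj K n))" using finite_set_pmf_ic_traj n by simp
  have "measure_pmf.expectation (ic_traj K (Suc n)) (\<lambda>xs. (Z (Suc n) xs)\<^sup>2) =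
    measure_pmf.expectation (ic_traj K n) (\<lambda>xs. measure_pmf.expectation (ic_step K n (xs ! n)) (\<lambda>s. (Z (Suc n) (xs @ [s]))\<^sup>2))"
    by (rule expectation_ic_traj_Suc[OF Suc(1) n])
  also have "\<dots> \<le> measure_pmf.expectation (ic_traj K n) (\<lambda>xs. (Z n xs)\<^sup>2 + 1)"
    using Suc by (intro expectation_mono_finite_pmf[OF fin] step) auto
  also have "\<dots> = measure_pmf.expectation (ic_traj K n) (\<lambda>xs. (Z n xs)\<^sup>2) + 1"
    using fin by (simp add: integrable_measure_pmf_finite)
  finally show ?case using Suc by simp
qed

definition mean_empty :: "nat \<Rightarrow> nat \<Rightarrow> real" where
  "mean_empty K n = (real K - 1) * (\<Prod>j\<in>{1..<n}. 1 - ic_rate K j)"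

lemma mean_empty_Suc: "1 \<le> n \<Longrightarrow> mean_empty K (Suc n) = (1 - ic_rate K n) * mean_empty K n"
  by (simp add: mean_empty_def prod.atLeastLessThan_Suc)

lemma second_moment_lines:
  assumes F: "F = ic_R \<or> F = ic_C" and "1 \<le> n" "n + K \<le> K ^ 2"
  shows "measure_pmf.expectation (ic_traj K n) (\<lambda>xs. (real K - real (F (xs ! n)) - mean_empty K n)\<^sup>2) \<le> n"
proof (rule ic_traj_second_moment_le[where N = "K ^ 2 - K"])
  show "(real K - real (F ([ic_state0, ic_state1] ! 1)) - mean_empty K 1)\<^sup>2 \<le> 1"
    using F by (auto simp: ic_state1_def ic_R_def ic_C_def mean_empty_def)
next
  fix n xs assume n: "1 \<le> n" "n < K ^ 2 - K" and xs: "xs \<in> set_pmf (ic_traj K n)"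
  have K: "1 \<le> K" using n by (cases K) auto
  have path: "ic_path K n xs" using ic_traj_path xs n by simp
  then have valid: "ic_valid K n (xs ! n)" and len: "length xs = Suc n" using n by (auto simp: ic_path_def)
  define x where "x = real K - real (F (xs ! n))"
  define b where "b = ic_rate K n"
  define \<mu> where "\<mu> = mean_empty K n"
  have "n + K \<le> K ^ 2" using n by simp
  then have b: "0 \<le> b" "b \<le> 1" using ic_rate_le_1[of n K] K by (auto simp: b_def)
  have p: "0 \<le> x * b" "x * b \<le> 1"
    using line_prob_bounds[OF valid _ F] n by (simp_all add: x_def b_def)
  have "measure_pmf.expectation (ic_step K n (xs ! n))
      (\<lambda>s. (real K - real (F ((xs @ [s]) ! Suc n)) - mean_empty K (Suc n))\<^sup>2) =
    measure_pmf.expectation (ic_step K n (xs ! n)) (\<lambda>s. (real K - real (F s) - (1 - b) * \<mu>)\<^sup>2)"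
    using n len by (simp add: nth_append mean_empty_Suc b_def \<mu>_def)
  also have "\<dots> = x * b * (x - 1 - (1 - b) * \<mu>)\<^sup>2 + (1 - x * b) * (x - (1 - b) * \<mu>)\<^sup>2"
    using expectation_ic_step_lines[OF valid _ F, where f = "\<lambda>a. (real K - real a - (1 - b) * \<mu>)\<^sup>2"] n
    by (simp add: x_def b_def algebra_simps)
  also have "\<dots> = ((1 - b) * (x - \<mu>))\<^sup>2 + x * b * (1 - x * b)"
    by (simp add: power2_eq_square algebra_simps)
  also have "\<dots> \<le> (x - \<mu>)\<^sup>2 + 1"
  proof (rule add_mono)
    have "(1 - b)\<^sup>2 \<le> 1" using b by (simp add: power_le_one)
    then show "((1 - b) * (x - \<mu>))\<^sup>2 \<le> (x - \<mu>)\<^sup>2"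
      using mult_right_mono[of "(1 - b)\<^sup>2" 1 "(x - \<mu>)\<^sup>2"] by (simp add: power_mult_distrib)
    show "x * b * (1 - x * b) \<le> 1" using mult_le_one[of "x * b" "1 - x * b"] p by simp
  qed
  finally show "measure_pmf.expectation (ic_step K n (xs ! n))
      (\<lambda>s. (real K - real (F ((xs @ [s]) ! Suc n)) - mean_empty K (Suc n))\<^sup>2)
    \<le> (real K - real (F (xs ! n)) - mean_empty K n)\<^sup>2 + 1" by (simp add: x_def \<mu>_def)
qed (use assms in auto)

definition green_compensator :: "nat \<Rightarrow> nat \<Rightarrow> ic_state list \<Rightarrow> real" where
  "green_compensator K n xs = 1 + (\<Sum>j\<in>{1..<n}. green_prob K j (xs ! j))"

lemma green_compensator_append:
  assumes "1 \<le> n" "length xs = Suc n"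
  shows "green_compensator K (Suc n) (xs @ [s]) = green_compensator K n xs + green_prob K n (xs ! n)"
proof -
  have "(\<Sum>j\<in>{1..<n}. green_prob K j ((xs @ [s]) ! j)) = (\<Sum>j\<in>{1..<n}. green_prob K j (xs ! j))"
    using assms by (intro sum.cong) (auto simp: nth_append)
  then show ?thesis using assms by (simp add: green_compensator_def sum.atLeastLessThan_Suc nth_append)
qed

lemma second_moment_green:
  assumes "1 \<le> n" "n \<le> K ^ 2"
  shows "measure_pmf.expectation (ic_traj K n) (\<lambda>xs. (real (ic_G (xs ! n)) - green_compensator K n xs)\<^sup>2) \<le> n"
proof (rule ic_traj_second_moment_le[where N = "K ^ 2"])
  show "(real (ic_G ([ic_state0, ic_state1] ! 1)) - green_compensator K 1 [ic_state0, ic_state1])\<^sup>2 \<le> 1"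
    by (simp add: ic_state1_def ic_G_def green_compensator_def)
next
  fix n xs assume n: "1 \<le> n" "n < K ^ 2" and xs: "xs \<in> set_pmf (ic_traj K n)"
  have path: "ic_path K n xs" using ic_traj_path xs n by simp
  then have valid: "ic_valid K n (xs ! n)" and len: "length xs = Suc n" using n by (auto simp: ic_path_def)
  define G where "G = real (ic_G (xs ! n))"
  define A where "A = green_compensator K n xs"
  define q where "q = green_prob K n (xs ! n)"
  have q: "0 \<le> q" "q \<le> 1" using green_prob_bounds[OF valid n(2)] by (auto simp: q_def)
  have "measure_pmf.expectation (ic_step K n (xs ! n))
      (\<lambda>s. (real (ic_G ((xs @ [s]) ! Suc n)) - green_compensator K (Suc n) (xs @ [s]))\<^sup>2) =
    measure_pmf.expectation (ic_step K n (xs ! n)) (\<lambda>s. (real (ic_G s) - (A + q))\<^sup>2)"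
    using n len by (simp add: nth_append green_compensator_append A_def q_def)
  also have "\<dots> = q * (1 + G - (A + q))\<^sup>2 + (1 - q) * (G - (A + q))\<^sup>2"
    using expectation_ic_step_green[OF valid n(2), where f = "\<lambda>g. (real g - (A + q))\<^sup>2"]
    by (simp add: G_def q_def)
  also have "\<dots> = (G - A)\<^sup>2 + q * (1 - q)"
    by (simp add: power2_eq_square algebra_simps)
  also have "\<dots> \<le> (G - A)\<^sup>2 + 1"
    using mult_le_one[of q "1 - q"] q by simp
  finally show "measure_pmf.expectation (ic_step K n (xs ! n))
      (\<lambda>s. (real (ic_G ((xs @ [s]) ! Suc n)) - green_compensator K (Suc n) (xs @ [s]))\<^sup>2)
    \<le> (real (ic_G (xs ! n)) - green_compensator K n xs)\<^sup>2 + 1" by (simp add: G_def A_def)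
qed (use assms in auto)

lemma expectation_abs_lines:
  assumes F: "F = ic_R \<or> F = ic_C" and "1 \<le> j" "j \<le> n" "n + K \<le> K ^ 2"
  shows "measure_pmf.expectation (ic_traj K n) (\<lambda>xs. \<bar>real K - real (F (xs ! j)) - mean_empty K j\<bar>) \<le> sqrt n"
proof -
  have "measure_pmf.expectation (ic_traj K n) (\<lambda>xs. \<bar>real K - real (F (xs ! j)) - mean_empty K j\<bar>)
      = measure_pmf.expectation (ic_traj K j) (\<lambda>xs. \<bar>real K - real (F (xs ! j)) - mean_empty K j\<bar>)"
    using assms by (intro expectation_ic_traj_nth)
  also have "\<dots> \<le> sqrt (measure_pmf.expectation (ic_traj K j) (\<lambda>xs. (real K - real (F (xs ! j)) - mean_empty K j)\<^sup>2))"
    by (rule expectation_abs_le_sqrt[OF finite_set_pmf_ic_traj]) (use assms in simp)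
  also have "\<dots> \<le> sqrt j" using assms by (intro real_sqrt_le_mono second_moment_lines[OF F]) auto
  also have "\<dots> \<le> sqrt n" using assms by simp
  finally show ?thesis .
qed

lemma expectation_abs_green_compensator:
  assumes "1 \<le> n" "n \<le> K ^ 2"
  shows "measure_pmf.expectation (ic_traj K n) (\<lambda>xs. \<bar>real (ic_G (xs ! n)) - green_compensator K n xs\<bar>) \<le> sqrt n"
proof -
  have "measure_pmf.expectation (ic_traj K n) (\<lambda>xs. \<bar>real (ic_G (xs ! n)) - green_compensator K n xs\<bar>)
      \<le> sqrt (measure_pmf.expectation (ic_traj K n) (\<lambda>xs. (real (ic_G (xs ! n)) - green_compensator K n xs)\<^sup>2))"
    by (rule expectation_abs_le_sqrt[OF finite_set_pmf_ic_traj[OF assms(2)]])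
  also have "\<dots> \<le> sqrt n" by (rule real_sqrt_le_mono[OF second_moment_green[OF assms]])
  finally show ?thesis .
qed

section \<open>The deterministic profiles\<close>

lemma mean_empty_bounds:
  assumes K: "1 \<le> K" and "u \<le> t" "t + K \<le> K ^ 2"
  shows "(real K - 1) * (1 - ic_rate K t) ^ (u - 1) \<le> mean_empty K u"
    and "mean_empty K u \<le> (real K - 1) * (1 - 1 / real K) ^ (u - 1)"
proof -
  have D: "real K \<le> real K ^ 2 - real t" using \<open>t + K \<le> K ^ 2\<close> by (simp flip: of_nat_add of_nat_power)
  have rate: "1 / real K \<le> ic_rate K j \<and> ic_rate K j \<le> ic_rate K t \<and> ic_rate K t \<le> 1" if "j < u" for j
  proof -
    have "real K ^ 2 - real t \<le> real K ^ 2 - real j" "real K ^ 2 - real j \<le> real K ^ 2"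
      using that \<open>u \<le> t\<close> by auto
    moreover have "0 < real K" "j < K ^ 2" "t < K ^ 2" using K that \<open>u \<le> t\<close> \<open>t + K \<le> K ^ 2\<close> by auto
    ultimately have "real K / real K ^ 2 \<le> ic_rate K j" "ic_rate K j \<le> ic_rate K t"
      using D unfolding ic_rate_def by (auto intro!: divide_left_mono mult_pos_pos)
    moreover have "real K / real K ^ 2 = 1 / real K" by (simp add: power2_eq_square)
    ultimately show ?thesis using ic_rate_le_1[OF \<open>t + K \<le> K ^ 2\<close> K] by simp
  qed
  have lower: "1 - ic_rate K t \<le> 1 - ic_rate K j" if "j < u" for j
    using rate[OF that] by linarith
  have "0 \<le> 1 - ic_rate K t" using ic_rate_le_1[OF \<open>t + K \<le> K ^ 2\<close> K] by simp
  have upper: "0 \<le> 1 - ic_rate K j \<and> 1 - ic_rate K j \<le> 1 - 1 / real K" if "j < u" for j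
    using rate[OF that] by linarith
  have "(\<Prod>j\<in>{1..<u}. 1 - ic_rate K t) \<le> (\<Prod>j\<in>{1..<u}. 1 - ic_rate K j)"
  proof (rule prod_mono)
    fix j assume "j \<in> {1..<u}"
    then show "0 \<le> 1 - ic_rate K t \<and> 1 - ic_rate K t \<le> 1 - ic_rate K j"
      using lower[of j] \<open>0 \<le> 1 - ic_rate K t\<close> by simp
  qed
  then show "(real K - 1) * (1 - ic_rate K t) ^ (u - 1) \<le> mean_empty K u"
    using K unfolding mean_empty_def by (intro mult_left_mono) auto
  have "(\<Prod>j\<in>{1..<u}. 1 - ic_rate K j) \<le> (\<Prod>j\<in>{1..<u}. 1 - 1 / real K)"
  proof (rule prod_mono)
    fix j assume "j \<in> {1..<u}"
    then show "0 \<le> 1 - ic_rate K j \<and> 1 - ic_rate K j \<le> 1 - 1 / real K"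
      using upper[of j] by simp
  qed
  then show "mean_empty K u \<le> (real K - 1) * (1 - 1 / real K) ^ (u - 1)"
    using K unfolding mean_empty_def by (intro mult_left_mono) auto
qed

lemma mean_empty_nonneg_le:
  assumes "1 \<le> K" "u + K \<le> K ^ 2"
  shows "0 \<le> mean_empty K u" "mean_empty K u \<le> real K"
proof -
  note bounds = mean_empty_bounds[OF assms(1) order_refl assms(2)]
  have "0 \<le> 1 - ic_rate K u" "0 \<le> 1 - 1 / real K" "1 - 1 / real K \<le> 1"
    using ic_rate_le_1[OF assms(2,1)] assms(1) by auto
  then have "0 \<le> (real K - 1) * (1 - ic_rate K u) ^ (u - 1)"
    and "(1 - 1 / real K) ^ (u - 1) \<le> 1"
    using assms(1) by (auto intro: power_le_one)
  then have "0 \<le> (real K - 1) * (1 - ic_rate K u) ^ (u - 1)"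
    and "(real K - 1) * (1 - 1 / real K) ^ (u - 1) \<le> real K - 1"
    using mult_left_le[of "(1 - 1 / real K) ^ (u - 1)" "real K - 1"] assms(1) by auto
  then show "0 \<le> mean_empty K u" "mean_empty K u \<le> real K" using bounds by linarith+
qed

definition green_mean :: "nat \<Rightarrow> nat \<Rightarrow> real" where
  "green_mean K n = 1 + (\<Sum>j\<in>{1..<n}. (mean_empty K j)\<^sup>2 / (real K ^ 2 - real j))"

lemma green_prob_deviation:
  assumes K: "1 \<le> K" and "u \<le> t" "t + K \<le> K ^ 2" and valid: "ic_valid K u s"
  shows "\<bar>green_prob K u s - (mean_empty K u)\<^sup>2 / (real K ^ 2 - real u)\<bar> \<le> ic_rate K t *
    (\<bar>real K - real (ic_R s) - mean_empty K u\<bar> + \<bar>real K - real (ic_C s) - mean_empty K u\<bar>)"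
proof -
  define x where "x = real K - real (ic_R s)"
  define y where "y = real K - real (ic_C s)"
  define m where "m = mean_empty K u"
  have x: "0 \<le> x" "x \<le> real K" using valid by (cases s) (auto simp: ic_valid_def ic_R_def x_def)
  have m: "0 \<le> m" "m \<le> real K"
    using mean_empty_nonneg_le[OF K, of u] \<open>u \<le> t\<close> \<open>t + K \<le> K ^ 2\<close> by (auto simp: m_def)
  have "real K \<le> real K ^ 2 - real t" using \<open>t + K \<le> K ^ 2\<close> by (simp flip: of_nat_add of_nat_power)
  then have Dt: "0 < real K ^ 2 - real t" using K by linarith
  have Dtu: "real K ^ 2 - real t \<le> real K ^ 2 - real u" using \<open>u \<le> t\<close> by simp
  have "green_prob K u s - m\<^sup>2 / (real K ^ 2 - real u) = (x * y - m\<^sup>2) / (real K ^ 2 - real u)"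
    by (simp add: green_prob_def x_def y_def diff_divide_distrib)
  then have "\<bar>green_prob K u s - m\<^sup>2 / (real K ^ 2 - real u)\<bar> = \<bar>x * y - m\<^sup>2\<bar> / (real K ^ 2 - real u)"
    using Dt Dtu by simp
  also have "\<dots> \<le> real K * (\<bar>x - m\<bar> + \<bar>y - m\<bar>) / (real K ^ 2 - real t)"
    using abs_mult_sub_square_le[OF x m, of y] Dt Dtu by (intro frac_le) auto
  finally show ?thesis by (simp add: ic_rate_def x_def y_def m_def)
qed

lemma green_compensator_deviation:
  assumes K: "1 \<le> K" and "t + K \<le> K ^ 2" and path: "ic_path K t xs"
  shows "\<bar>green_compensator K t xs - green_mean K t\<bar> \<le> (\<Sum>j\<in>{1..<t}. ic_rate K t *
    (\<bar>real K - real (ic_R (xs ! j)) - mean_empty K j\<bar> + \<bar>real K - real (ic_C (xs ! j)) - mean_empty K j\<bar>))"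
proof -
  have "\<bar>green_compensator K t xs - green_mean K t\<bar> =
      \<bar>\<Sum>j\<in>{1..<t}. green_prob K j (xs ! j) - (mean_empty K j)\<^sup>2 / (real K ^ 2 - real j)\<bar>"
    by (simp add: green_compensator_def green_mean_def sum_subtractf)
  also have "\<dots> \<le> (\<Sum>j\<in>{1..<t}. \<bar>green_prob K j (xs ! j) - (mean_empty K j)\<^sup>2 / (real K ^ 2 - real j)\<bar>)"
    by (rule sum_abs)
  also have "\<dots> \<le> (\<Sum>j\<in>{1..<t}. ic_rate K t *
    (\<bar>real K - real (ic_R (xs ! j)) - mean_empty K j\<bar> + \<bar>real K - real (ic_C (xs ! j)) - mean_empty K j\<bar>))"
  proof (rule sum_mono)
    fix j assume j: "j \<in> {1..<t}"
    then have "ic_valid K j (xs ! j)" using path by (simp add: ic_path_def)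
    then show "\<bar>green_prob K j (xs ! j) - (mean_empty K j)\<^sup>2 / (real K ^ 2 - real j)\<bar> \<le> ic_rate K t *
      (\<bar>real K - real (ic_R (xs ! j)) - mean_empty K j\<bar> + \<bar>real K - real (ic_C (xs ! j)) - mean_empty K j\<bar>)"
      using j by (intro green_prob_deviation[OF K _ \<open>t + K \<le> K ^ 2\<close>]) auto
  qed
  finally show ?thesis .
qed

lemma expectation_green_deviation:
  assumes "1 \<le> t" "t + K \<le> K ^ 2"
  shows "measure_pmf.expectation (ic_traj K t) (\<lambda>xs. \<bar>real (ic_G (xs ! t)) - green_mean K t\<bar>)
    \<le> sqrt t + 2 * real (t - 1) * ic_rate K t * sqrt t"
proof -
  have K: "1 \<le> K" using assms by (cases K) auto
  have tK: "t \<le> K ^ 2" using assms by simp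
  have fin: "finite (set_pmf (ic_traj K t))" by (rule finite_set_pmf_ic_traj[OF tK])
  define w where "w = ic_rate K t"
  have w: "0 \<le> w" using ic_rate_le_1[OF assms(2) K] by (simp add: w_def)
  let ?dev = "\<lambda>F j xs. \<bar>real K - real (F (xs ! j)) - mean_empty K j\<bar>"
  have "measure_pmf.expectation (ic_traj K t) (\<lambda>xs. \<bar>real (ic_G (xs ! t)) - green_mean K t\<bar>) \<le>
     measure_pmf.expectation (ic_traj K t) (\<lambda>xs. \<bar>real (ic_G (xs ! t)) - green_compensator K t xs\<bar>
       + (\<Sum>j\<in>{1..<t}. w * (?dev ic_R j xs + ?dev ic_C j xs)))"
  proof (rule expectation_mono_finite_pmf[OF fin])
    fix xs assume "xs \<in> set_pmf (ic_traj K t)"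
    then have "ic_path K t xs" by (rule ic_traj_path[OF tK])
    from green_compensator_deviation[OF K assms(2) this]
    show "\<bar>real (ic_G (xs ! t)) - green_mean K t\<bar> \<le> \<bar>real (ic_G (xs ! t)) - green_compensator K t xs\<bar>
       + (\<Sum>j\<in>{1..<t}. w * (?dev ic_R j xs + ?dev ic_C j xs))"
      unfolding w_def by linarith
  qed
  also have "\<dots> = measure_pmf.expectation (ic_traj K t) (\<lambda>xs. \<bar>real (ic_G (xs ! t)) - green_compensator K t xs\<bar>)
      + (\<Sum>j\<in>{1..<t}. w * (measure_pmf.expectation (ic_traj K t) (?dev ic_R j)
           + measure_pmf.expectation (ic_traj K t) (?dev ic_C j)))"
    using fin by (simp add: Bochner_Integration.integral_add Bochner_Integration.integral_sum integrable_measure_pmf_finite)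
  also have "\<dots> \<le> sqrt t + (\<Sum>j\<in>{1..<t}. w * (sqrt t + sqrt t))"
  proof (rule add_mono)
    show "measure_pmf.expectation (ic_traj K t) (\<lambda>xs. \<bar>real (ic_G (xs ! t)) - green_compensator K t xs\<bar>) \<le> sqrt t"
      by (rule expectation_abs_green_compensator[OF assms(1) tK])
    have "measure_pmf.expectation (ic_traj K t) (?dev F j) \<le> sqrt t"
      if "F = ic_R \<or> F = ic_C" and "j \<in> {1..<t}" for F j
      using that assms by (intro expectation_abs_lines) auto
    then show "(\<Sum>j\<in>{1..<t}. w * (measure_pmf.expectation (ic_traj K t) (?dev ic_R j)
           + measure_pmf.expectation (ic_traj K t) (?dev ic_C j))) \<le> (\<Sum>j\<in>{1..<t}. w * (sqrt t + sqrt t))"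
      using w by (intro sum_mono mult_left_mono add_mono) auto
  qed
  also have "\<dots> = sqrt t + 2 * real (t - 1) * ic_rate K t * sqrt t" by (simp add: w_def)
  finally show ?thesis .
qed

lemma green_mean_bounds:
  assumes K: "1 \<le> K" and tK: "t + K \<le> K ^ 2"
  shows "1 + (real K - 1)\<^sup>2 / real K ^ 2 * (\<Sum>i<t - 1. (1 - ic_rate K t) ^ (2 * i)) \<le> green_mean K t"
    and "green_mean K t \<le> 1 + (real K - 1)\<^sup>2 / (real K ^ 2 - real t) * (\<Sum>i<t - 1. (1 - 1 / real K) ^ (2 * i))"
proof -
  have shift: "green_mean K t = 1 + (\<Sum>i<t - 1. (mean_empty K (Suc i))\<^sup>2 / (real K ^ 2 - real (Suc i)))"
    unfolding green_mean_def sum.atLeastLessThan_shift_0[of _ 1 t] by (simp add: atLeast0LessThan)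
  have "real K \<le> real K ^ 2 - real t" using tK by (simp flip: of_nat_add of_nat_power)
  then have Dt: "0 < real K ^ 2 - real t" using K by linarith
  have rate: "0 \<le> 1 - ic_rate K t" "0 \<le> 1 - 1 / real K" using ic_rate_le_1[OF tK K] K by auto
  have "(real K - 1)\<^sup>2 / real K ^ 2 * (1 - ic_rate K t) ^ (2 * i)
      \<le> (mean_empty K (Suc i))\<^sup>2 / (real K ^ 2 - real (Suc i))"
    and "(mean_empty K (Suc i))\<^sup>2 / (real K ^ 2 - real (Suc i))
      \<le> (real K - 1)\<^sup>2 / (real K ^ 2 - real t) * (1 - 1 / real K) ^ (2 * i)" if i: "i < t - 1" for i
  proof -
    have D: "real K ^ 2 - real t \<le> real K ^ 2 - real (Suc i)" "real K ^ 2 - real (Suc i) \<le> real K ^ 2"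
      using i by auto
    have "0 < real K ^ 2 - real (Suc i)" using D Dt by linarith
    note bounds = mean_empty_bounds[OF K _ tK, of "Suc i"]
    have lo: "((real K - 1) * (1 - ic_rate K t) ^ i)\<^sup>2 \<le> (mean_empty K (Suc i))\<^sup>2"
      using bounds(1) i rate K by (intro power_mono) auto
    have hi: "(mean_empty K (Suc i))\<^sup>2 \<le> ((real K - 1) * (1 - 1 / real K) ^ i)\<^sup>2"
      using bounds i mean_empty_nonneg_le[OF K, of "Suc i"] tK by (intro power_mono) auto
    show "(real K - 1)\<^sup>2 / real K ^ 2 * (1 - ic_rate K t) ^ (2 * i)
      \<le> (mean_empty K (Suc i))\<^sup>2 / (real K ^ 2 - real (Suc i))"
      using lo D Dt \<open>0 < real K ^ 2 - real (Suc i)\<close> by (auto simp: power_mult_distrib power_mult mult.commute intro!: frac_le)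
    show "(mean_empty K (Suc i))\<^sup>2 / (real K ^ 2 - real (Suc i))
      \<le> (real K - 1)\<^sup>2 / (real K ^ 2 - real t) * (1 - 1 / real K) ^ (2 * i)"
      using hi D Dt by (auto simp: power_mult_distrib power_mult mult.commute intro!: frac_le)
  qed
  then show "1 + (real K - 1)\<^sup>2 / real K ^ 2 * (\<Sum>i<t - 1. (1 - ic_rate K t) ^ (2 * i)) \<le> green_mean K t"
    and "green_mean K t \<le> 1 + (real K - 1)\<^sup>2 / (real K ^ 2 - real t) * (\<Sum>i<t - 1. (1 - 1 / real K) ^ (2 * i))"
    unfolding shift sum_distrib_left by (auto intro!: sum_mono)
qed

definition green_limit :: "real \<Rightarrow> real" where
  "green_limit s = (1 - exp (- (2 * s))) / 2"

lemma green_limit_less_iff: "green_limit a < green_limit b \<longleftrightarrow> a < b"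
  by (simp add: green_limit_def)

lemma green_limit_pos: "0 < s \<Longrightarrow> 0 < green_limit s"
  by (simp add: green_limit_def)

section \<open>Concentration at linear times\<close>

locale scaled_time =
  fixes t :: "nat \<Rightarrow> nat" and s :: real
  assumes pos: "0 < s" and scaled: "(\<lambda>K. real (t K) / real K) \<longlonglongrightarrow> s"
begin

lemma eventually_time_bounds: "eventually (\<lambda>K. 1 \<le> t K \<and> t K + K \<le> K ^ 2) sequentially"
proof -
  have "eventually (\<lambda>K. 0 < real (t K) / real K) sequentially"
    using order_tendstoD(1)[OF scaled pos] .
  moreover have "eventually (\<lambda>K. real (t K) / real K < s + 1) sequentially"
    using order_tendstoD(2)[OF scaled, of "s + 1"] by simp
  moreover have "eventually (\<lambda>K. s + 2 \<le> real K) sequentially" by real_asymp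
  ultimately show ?thesis
  proof eventually_elim
    case (elim K)
    then have K: "0 < real K" using pos by linarith
    then have "real (t K) < (s + 1) * real K" using elim(2) pos_divide_less_eq[OF K] by simp
    also have "\<dots> \<le> (real K - 1) * real K" using elim K by (intro mult_right_mono) auto
    finally have "real (t K + K) < real (K ^ 2)" by (simp add: power2_eq_square algebra_simps)
    moreover have "0 < t K" using elim K by (simp add: zero_less_divide_iff)
    ultimately show ?case by (simp only: of_nat_less_iff) simp
  qed
qed

lemma rate_limits:
  shows "(\<lambda>K. real K * ic_rate K (t K)) \<longlonglongrightarrow> 1"
    and "(\<lambda>K. ic_rate K (t K)) \<longlonglongrightarrow> 0"
    and "(\<lambda>K. real (t K - 1) / real K) \<longlonglongrightarrow> s"
    and "(\<lambda>K. real (t K - 1) * ic_rate K (t K)) \<longlonglongrightarrow> s"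
    and "eventually (\<lambda>K. 0 < ic_rate K (t K)) sequentially"
proof -
  have inv: "(\<lambda>K. 1 / real K) \<longlonglongrightarrow> 0" by real_asymp
  have "(\<lambda>K. 1 / (1 - real (t K) / real K * (1 / real K))) \<longlonglongrightarrow> 1 / (1 - s * 0)"
    by (intro tendsto_intros scaled inv) simp
  moreover have "eventually (\<lambda>K. 1 / (1 - real (t K) / real K * (1 / real K)) = real K * ic_rate K (t K)) sequentially"
    using eventually_time_bounds
  proof eventually_elim
    case (elim K)
    then have "1 \<le> K" by (cases K) auto
    with elim have "real K ^ 2 - real (t K) \<noteq> 0" "real K \<noteq> 0"
      by (auto simp flip: of_nat_power)
    then show ?case by (simp add: ic_rate_def field_simps power2_eq_square)
  qed
  ultimately show Krate: "(\<lambda>K. real K * ic_rate K (t K)) \<longlonglongrightarrow> 1" by (simp add: Lim_transform_eventually)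
  have "(\<lambda>K. 1 / real K * (real K * ic_rate K (t K))) \<longlonglongrightarrow> 0 * 1"
    by (intro tendsto_intros inv Krate)
  moreover have "eventually (\<lambda>K. 1 / real K * (real K * ic_rate K (t K)) = ic_rate K (t K)) sequentially"
    using eventually_gt_at_top[of 0] by eventually_elim simp
  ultimately show "(\<lambda>K. ic_rate K (t K)) \<longlonglongrightarrow> 0" by (simp add: Lim_transform_eventually)
  have "(\<lambda>K. real (t K) / real K - 1 / real K) \<longlonglongrightarrow> s - 0"
    by (intro tendsto_intros scaled inv)
  moreover have "eventually (\<lambda>K. real (t K) / real K - 1 / real K = real (t K - 1) / real K) sequentially"
    using eventually_time_bounds by eventually_elim (simp add: of_nat_diff diff_divide_distrib)
  ultimately show pred: "(\<lambda>K. real (t K - 1) / real K) \<longlonglongrightarrow> s" by (simp add: Lim_transform_eventually)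
  have "(\<lambda>K. real (t K - 1) / real K * (real K * ic_rate K (t K))) \<longlonglongrightarrow> s * 1"
    by (intro tendsto_intros pred Krate)
  moreover have "eventually (\<lambda>K. real (t K - 1) / real K * (real K * ic_rate K (t K)) = real (t K - 1) * ic_rate K (t K)) sequentially"
    using eventually_gt_at_top[of 0] by eventually_elim simp
  ultimately show "(\<lambda>K. real (t K - 1) * ic_rate K (t K)) \<longlonglongrightarrow> s" by (simp add: Lim_transform_eventually)
  show "eventually (\<lambda>K. 0 < ic_rate K (t K)) sequentially"
    using eventually_time_bounds
  proof eventually_elim
    case (elim K)
    then have "1 \<le> K" by (cases K) auto
    then show ?case using ic_rate_le_1 elim by auto
  qed
qed

lemma sqrt_time_limit: "(\<lambda>K. sqrt (real (t K)) / real K) \<longlonglongrightarrow> 0"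
proof -
  have "(\<lambda>K. sqrt (real (t K) / real K) * sqrt (1 / real K)) \<longlonglongrightarrow> sqrt s * 0"
    by (intro tendsto_intros scaled) real_asymp
  moreover have "sqrt (real (t K) / real K) * sqrt (1 / real K) = sqrt (real (t K)) / real K" for K
    by (simp add: real_sqrt_divide real_sqrt_mult[symmetric])
  ultimately show ?thesis by simp
qed

lemma mean_empty_limit: "(\<lambda>K. mean_empty K (t K) / real K) \<longlonglongrightarrow> exp (- s)"
proof (rule tendsto_sandwich)
  have frac: "(\<lambda>K. (real K - 1) / real K) \<longlonglongrightarrow> 1" by real_asymp
  have "(\<lambda>K. (1 - ic_rate K (t K)) ^ (t K - 1)) \<longlonglongrightarrow> exp (- s)"
    using rate_limits by (intro tendsto_power_one_minus_exp) (auto elim: eventually_mono)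
  from tendsto_mult[OF frac this]
  show "(\<lambda>K. (real K - 1) / real K * (1 - ic_rate K (t K)) ^ (t K - 1)) \<longlonglongrightarrow> exp (- s)" by simp
  have "(\<lambda>K. (1 - 1 / real K) ^ (t K - 1)) \<longlonglongrightarrow> exp (- s)"
    using rate_limits(3) by (intro tendsto_power_one_minus_exp) (simp_all, real_asymp)
  from tendsto_mult[OF frac this]
  show "(\<lambda>K. (real K - 1) / real K * (1 - 1 / real K) ^ (t K - 1)) \<longlonglongrightarrow> exp (- s)" by simp
  show "eventually (\<lambda>K. (real K - 1) / real K * (1 - ic_rate K (t K)) ^ (t K - 1) \<le> mean_empty K (t K) / real K) sequentially"
    using eventually_time_bounds
  proof eventually_elim
    case (elim K)
    then have "1 \<le> K" by (cases K) auto
    then show ?case using mean_empty_bounds(1)[OF _ order_refl, of K "t K"] elim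
      by (simp add: divide_right_mono)
  qed
  show "eventually (\<lambda>K. mean_empty K (t K) / real K \<le> (real K - 1) / real K * (1 - 1 / real K) ^ (t K - 1)) sequentially"
    using eventually_time_bounds
  proof eventually_elim
    case (elim K)
    then have "1 \<le> K" by (cases K) auto
    then show ?case using mean_empty_bounds(2)[OF _ order_refl, of K "t K"] elim
      by (simp add: divide_right_mono)
  qed
qed

lemma green_mean_limit: "(\<lambda>K. green_mean K (t K) / real K) \<longlonglongrightarrow> green_limit s"
  unfolding green_limit_def
proof (rule tendsto_sandwich)
  let ?\<beta> = "\<lambda>K. ic_rate K (t K)"
  let ?sq = "\<lambda>K. (real K - 1)\<^sup>2 / real K ^ 2"
  have inv: "(\<lambda>K. 1 / real K) \<longlonglongrightarrow> 0" and sq: "?sq \<longlonglongrightarrow> 1" by real_asymp+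
  have geo_rate: "(\<lambda>K. (\<Sum>i<t K - 1. (1 - ?\<beta> K) ^ (2 * i)) / real K) \<longlonglongrightarrow> (1 - exp (- (2 * s))) / 2"
    using rate_limits by (intro tendsto_geometric_sum_scaled) auto
  have geo_inv: "(\<lambda>K. (\<Sum>i<t K - 1. (1 - 1 / real K) ^ (2 * i)) / real K) \<longlonglongrightarrow> (1 - exp (- (2 * s))) / 2"
  proof (rule tendsto_geometric_sum_scaled[OF inv])
    show "(\<lambda>K. real K * (1 / real K)) \<longlonglongrightarrow> 1" "eventually (\<lambda>K. 0 < 1 / real K) sequentially" by real_asymp+
    show "(\<lambda>K. real (t K - 1) * (1 / real K)) \<longlonglongrightarrow> s" using rate_limits(3) by simp
  qed
  have "(\<lambda>K. 1 / real K + ?sq K * ((\<Sum>i<t K - 1. (1 - ?\<beta> K) ^ (2 * i)) / real K))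
      \<longlonglongrightarrow> 0 + 1 * ((1 - exp (- (2 * s))) / 2)"
    by (intro tendsto_intros inv sq geo_rate)
  then show "(\<lambda>K. 1 / real K + ?sq K * ((\<Sum>i<t K - 1. (1 - ?\<beta> K) ^ (2 * i)) / real K))
      \<longlonglongrightarrow> (1 - exp (- (2 * s))) / 2" by simp
  have "(\<lambda>K. 1 / real K + ?sq K * (real K * ?\<beta> K) * ((\<Sum>i<t K - 1. (1 - 1 / real K) ^ (2 * i)) / real K))
      \<longlonglongrightarrow> 0 + 1 * 1 * ((1 - exp (- (2 * s))) / 2)"
    by (intro tendsto_intros inv sq geo_inv rate_limits(1))
  then show "(\<lambda>K. 1 / real K + ?sq K * (real K * ?\<beta> K) * ((\<Sum>i<t K - 1. (1 - 1 / real K) ^ (2 * i)) / real K))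
      \<longlonglongrightarrow> (1 - exp (- (2 * s))) / 2" by simp
  show "eventually (\<lambda>K. 1 / real K + ?sq K * ((\<Sum>i<t K - 1. (1 - ?\<beta> K) ^ (2 * i)) / real K)
      \<le> green_mean K (t K) / real K) sequentially"
    using eventually_time_bounds
  proof eventually_elim
    case (elim K)
    then have K: "1 \<le> K" by (cases K) auto
    from divide_right_mono[OF green_mean_bounds(1)[OF K, of "t K"], of "real K"] elim K
    show ?case by (simp add: add_divide_distrib)
  qed
  show "eventually (\<lambda>K. green_mean K (t K) / real K
      \<le> 1 / real K + ?sq K * (real K * ?\<beta> K) * ((\<Sum>i<t K - 1. (1 - 1 / real K) ^ (2 * i)) / real K)) sequentially"
    using eventually_time_bounds
  proof eventually_elim
    case (elim K)
    then have K: "1 \<le> K" by (cases K) auto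
    have "(real K - 1)\<^sup>2 / (real K ^ 2 - real (t K)) = ?sq K * (real K * ?\<beta> K)"
      using K by (simp add: ic_rate_def power2_eq_square)
    with divide_right_mono[OF green_mean_bounds(2)[OF K, of "t K"], of "real K"] elim K
    show ?case by (simp add: add_divide_distrib)
  qed
qed

lemma green_deviation_limit:
  "(\<lambda>K. (sqrt (t K) + 2 * real (t K - 1) * ic_rate K (t K) * sqrt (t K)) / real K) \<longlonglongrightarrow> 0"
proof -
  have "(\<lambda>K. sqrt (t K) / real K + 2 * (real (t K - 1) * ic_rate K (t K)) * (sqrt (t K) / real K))
      \<longlonglongrightarrow> 0 + 2 * s * 0"
    by (intro tendsto_intros sqrt_time_limit rate_limits)
  then show ?thesis by (simp add: add_divide_distrib mult.assoc)
qed

lemma lines_tendsto_in_prob: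
  assumes F: "F = ic_R \<or> F = ic_C"
  shows "tendsto_in_prob ic_full (\<lambda>K xs. real (F (xs ! t K)) / real K) (1 - exp (- s))"
proof (rule tendsto_in_probI_L1[OF finite_set_pmf_ic_full _ sqrt_time_limit])
  show "(\<lambda>K. 1 - mean_empty K (t K) / real K) \<longlonglongrightarrow> 1 - exp (- s)"
    by (intro tendsto_intros mean_empty_limit)
  show "eventually (\<lambda>K. measure_pmf.expectation (ic_full K)
      (\<lambda>xs. \<bar>real (F (xs ! t K)) / real K - (1 - mean_empty K (t K) / real K)\<bar>) \<le> sqrt (t K) / real K) sequentially"
    using eventually_time_bounds
  proof eventually_elim
    case (elim K)
    then have K: "0 < real K" by (cases K) auto
    let ?f = "\<lambda>s. \<bar>real K - real (F s) - mean_empty K (t K)\<bar>"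
    have "\<bar>real (F (xs ! t K)) / real K - (1 - mean_empty K (t K) / real K)\<bar> = ?f (xs ! t K) / real K" for xs
    proof -
      have "real (F (xs ! t K)) / real K - (1 - mean_empty K (t K) / real K)
          = - ((real K - real (F (xs ! t K)) - mean_empty K (t K)) / real K)"
        using K by (simp add: field_simps)
      then show ?thesis using K by (simp add: abs_divide)
    qed
    moreover have "measure_pmf.expectation (ic_full K) (\<lambda>xs. ?f (xs ! t K))
        = measure_pmf.expectation (ic_traj K (t K)) (\<lambda>xs. ?f (xs ! t K))"
      unfolding ic_full_def using elim by (intro expectation_ic_traj_nth) simp
    moreover have "measure_pmf.expectation (ic_traj K (t K)) (\<lambda>xs. ?f (xs ! t K)) \<le> sqrt (t K)"
      using elim by (intro expectation_abs_lines[OF F]) auto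
    ultimately show ?case using K by (simp add: divide_right_mono)
  qed
qed

lemma green_tendsto_in_prob:
  "tendsto_in_prob ic_full (\<lambda>K xs. real (ic_G (xs ! t K)) / real K) (green_limit s)"
proof (rule tendsto_in_probI_L1[OF finite_set_pmf_ic_full green_mean_limit green_deviation_limit])
  show "eventually (\<lambda>K. measure_pmf.expectation (ic_full K)
      (\<lambda>xs. \<bar>real (ic_G (xs ! t K)) / real K - green_mean K (t K) / real K\<bar>)
    \<le> (sqrt (t K) + 2 * real (t K - 1) * ic_rate K (t K) * sqrt (t K)) / real K) sequentially"
    using eventually_time_bounds
  proof eventually_elim
    case (elim K)
    then have K: "0 < real K" by (cases K) auto
    let ?f = "\<lambda>s. \<bar>real (ic_G s) - green_mean K (t K)\<bar>"
    have "\<bar>real (ic_G (xs ! t K)) / real K - green_mean K (t K) / real K\<bar> = ?f (xs ! t K) / real K" for xs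
      using K by (simp add: diff_divide_distrib[symmetric] abs_divide)
    moreover have "measure_pmf.expectation (ic_full K) (\<lambda>xs. ?f (xs ! t K))
        = measure_pmf.expectation (ic_traj K (t K)) (\<lambda>xs. ?f (xs ! t K))"
      unfolding ic_full_def using elim by (intro expectation_ic_traj_nth) simp
    moreover have "measure_pmf.expectation (ic_traj K (t K)) (\<lambda>xs. ?f (xs ! t K))
        \<le> sqrt (t K) + 2 * real (t K - 1) * ic_rate K (t K) * sqrt (t K)"
      using elim by (intro expectation_green_deviation) auto
    ultimately show ?case using K by (simp add: divide_right_mono)
  qed
qed

end

lemma scaled_time_floor: "0 < s \<Longrightarrow> scaled_time (\<lambda>K. nat \<lfloor>s * real K\<rfloor>) s"
proof unfold_locales
  assume s: "0 < s"
  have floor: "s * real K - 1 \<le> real (nat \<lfloor>s * real K\<rfloor>) \<and> real (nat \<lfloor>s * real K\<rfloor>) \<le> s * real K" for K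
    using s by (simp add: of_nat_nat)
  show "(\<lambda>K. real (nat \<lfloor>s * real K\<rfloor>) / real K) \<longlonglongrightarrow> s"
  proof (rule tendsto_sandwich)
    show "eventually (\<lambda>K. s - 1 / real K \<le> real (nat \<lfloor>s * real K\<rfloor>) / real K) sequentially"
      using eventually_gt_at_top[of 0]
    proof eventually_elim
      case (elim K)
      then have "s - 1 / real K = (s * real K - 1) / real K" by (simp add: field_simps)
      also have "\<dots> \<le> real (nat \<lfloor>s * real K\<rfloor>) / real K" using floor by (simp add: divide_right_mono)
      finally show ?case .
    qed
    show "eventually (\<lambda>K. real (nat \<lfloor>s * real K\<rfloor>) / real K \<le> s) sequentially"
      using eventually_gt_at_top[of 0] by eventually_elim (use floor in \<open>simp add: field_simps\<close>)
    show "(\<lambda>K. s - 1 / real K) \<longlonglongrightarrow> s" "(\<lambda>K. s) \<longlonglongrightarrow> s" by real_asymp+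
  qed
qed

section \<open>The hitting time\<close>

lemma hitting_scale:
  assumes "0 < \<epsilon>" "\<epsilon> < 1/2"
  shows "0 < (1/2) * ln (1 / (1 - 2 * \<epsilon>))"
    and "green_limit ((1/2) * ln (1 / (1 - 2 * \<epsilon>))) = \<epsilon>"
    and "exp (- ((1/2) * ln (1 / (1 - 2 * \<epsilon>)))) = sqrt (1 - 2 * \<epsilon>)"
proof -
  have p: "0 < 1 - 2 * \<epsilon>" using assms by simp
  then show "0 < (1/2) * ln (1 / (1 - 2 * \<epsilon>))" using assms by simp
  have e: "exp (- (2 * ((1/2) * ln (1 / (1 - 2 * \<epsilon>))))) = 1 - 2 * \<epsilon>"
    using p by (simp add: ln_div)
  then show "green_limit ((1/2) * ln (1 / (1 - 2 * \<epsilon>))) = \<epsilon>" by (simp add: green_limit_def)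
  have "(exp (- ((1/2) * ln (1 / (1 - 2 * \<epsilon>)))))\<^sup>2 = 1 - 2 * \<epsilon>"
    using e by (simp add: power2_eq_square flip: exp_add)
  then show "exp (- ((1/2) * ln (1 / (1 - 2 * \<epsilon>)))) = sqrt (1 - 2 * \<epsilon>)"
    by (intro real_sqrt_unique[symmetric]) auto
qed

lemma ic_tau_scaled_window:
  assumes path: "ic_path K (K ^ 2) xs" and t: "t1 \<le> t2" "t2 \<le> K ^ 2" and "0 \<le> \<epsilon>" and K: "1 < \<eta> * real K"
    and G: "real (ic_G (xs ! t1)) / real K < \<epsilon> - \<eta>" "\<epsilon> + \<eta> < real (ic_G (xs ! t2)) / real K"
  shows "\<exists>t. ic_tau (nat \<lfloor>\<epsilon> * real K\<rfloor>) xs = Some t \<and> t1 < t \<and> t \<le> t2"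
proof -
  have K0: "0 < real K" using K by (cases K) auto
  have m: "\<epsilon> * real K - 1 < real (nat \<lfloor>\<epsilon> * real K\<rfloor>)" "real (nat \<lfloor>\<epsilon> * real K\<rfloor>) \<le> \<epsilon> * real K"
    using \<open>0 \<le> \<epsilon>\<close> K0 by (simp_all add: of_nat_nat)
  have "real (ic_G (xs ! t1)) < (\<epsilon> - \<eta>) * real K" "(\<epsilon> + \<eta>) * real K < real (ic_G (xs ! t2))"
    using G K0 by (simp_all add: pos_divide_less_eq pos_less_divide_eq)
  then have "real (ic_G (xs ! t1)) < \<epsilon> * real K - \<eta> * real K" "\<epsilon> * real K + \<eta> * real K < real (ic_G (xs ! t2))"
    by (simp_all add: algebra_simps)
  then have "real (ic_G (xs ! t1)) < real (nat \<lfloor>\<epsilon> * real K\<rfloor>)" "real (nat \<lfloor>\<epsilon> * real K\<rfloor>) < real (ic_G (xs ! t2))"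
    using m K by linarith+
  then have "ic_G (xs ! t1) < nat \<lfloor>\<epsilon> * real K\<rfloor>" "nat \<lfloor>\<epsilon> * real K\<rfloor> \<le> ic_G (xs ! t2)"
    by simp_all
  with t show ?thesis by (intro ic_tau_between[OF path]) auto
qed

lemma hitting_time_window:
  assumes s1: "0 < s1" and g1: "green_limit s1 < \<epsilon>" and g2: "\<epsilon> < green_limit s2"
  shows "(\<lambda>K. measure_pmf.prob (ic_full K) {xs. case ic_tau (nat \<lfloor>\<epsilon> * real K\<rfloor>) xs of None \<Rightarrow> True
     | Some t \<Rightarrow> t \<le> nat \<lfloor>s1 * real K\<rfloor> \<or> nat \<lfloor>s2 * real K\<rfloor> < t}) \<longlonglongrightarrow> 0"
proof -
  have "green_limit s1 < green_limit s2" using g1 g2 by linarith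
  then have "s1 < s2" by (simp add: green_limit_less_iff)
  have "0 < \<epsilon>" using green_limit_pos[OF s1] g1 by simp
  interpret T1: scaled_time "\<lambda>K. nat \<lfloor>s1 * real K\<rfloor>" s1 by (rule scaled_time_floor[OF s1])
  interpret T2: scaled_time "\<lambda>K. nat \<lfloor>s2 * real K\<rfloor>" s2 by (rule scaled_time_floor) (use s1 \<open>s1 < s2\<close> in simp)
  define \<eta> where "\<eta> = min (\<epsilon> - green_limit s1) (green_limit s2 - \<epsilon>) / 2"
  have \<eta>: "0 < \<eta>" "\<eta> \<le> (\<epsilon> - green_limit s1) / 2" "\<eta> \<le> (green_limit s2 - \<epsilon>) / 2"
    using g1 g2 by (simp_all add: \<eta>_def)
  define E where "E = (\<lambda>s' K. {xs. \<eta> \<le> \<bar>real (ic_G (xs ! nat \<lfloor>s' * real K\<rfloor>)) / real K - green_limit s'\<bar>})"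
  have "(\<lambda>K. measure_pmf.prob (ic_full K) (E s1 K \<union> E s2 K)) \<longlonglongrightarrow> 0"
    unfolding E_def
    by (intro prob_Un_tendsto_zero tendsto_in_probD[OF _ \<eta>(1)] T1.green_tendsto_in_prob T2.green_tendsto_in_prob)
  then show ?thesis
  proof (rule prob_tendsto_zero_subset[rotated])
    have "eventually (\<lambda>K. 1 / \<eta> < real K) sequentially" by real_asymp
    then show "eventually (\<lambda>K. {xs. case ic_tau (nat \<lfloor>\<epsilon> * real K\<rfloor>) xs of None \<Rightarrow> True
       | Some t \<Rightarrow> t \<le> nat \<lfloor>s1 * real K\<rfloor> \<or> nat \<lfloor>s2 * real K\<rfloor> < t} \<inter> set_pmf (ic_full K) \<subseteq> E s1 K \<union> E s2 K) sequentially"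
      using T2.eventually_time_bounds
    proof eventually_elim
      case (elim K)
      have K: "1 < \<eta> * real K" using elim(1) pos_divide_less_eq[OF \<eta>(1)] by (simp add: mult.commute)
      have "nat \<lfloor>s1 * real K\<rfloor> \<le> nat \<lfloor>s2 * real K\<rfloor>"
        using \<open>s1 < s2\<close> by (intro nat_mono floor_mono mult_right_mono) simp_all
      moreover have "nat \<lfloor>s2 * real K\<rfloor> \<le> K ^ 2" using elim(2) by simp
      moreover have "ic_path K (K ^ 2) xs" if "xs \<in> set_pmf (ic_full K)" for xs
        using that ic_traj_path by (simp add: ic_full_def)
      moreover have "real (ic_G (xs ! nat \<lfloor>s1 * real K\<rfloor>)) / real K < \<epsilon> - \<eta>"
        "\<epsilon> + \<eta> < real (ic_G (xs ! nat \<lfloor>s2 * real K\<rfloor>)) / real K" if "xs \<notin> E s1 K \<union> E s2 K" for xs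
        using that \<eta> by (auto simp: E_def abs_less_iff)
      ultimately have window: "\<exists>t. ic_tau (nat \<lfloor>\<epsilon> * real K\<rfloor>) xs = Some t \<and> nat \<lfloor>s1 * real K\<rfloor> < t \<and> t \<le> nat \<lfloor>s2 * real K\<rfloor>"
        if "xs \<in> set_pmf (ic_full K)" "xs \<notin> E s1 K \<union> E s2 K" for xs
        using that \<open>0 < \<epsilon>\<close> K by (intro ic_tau_scaled_window) auto
      show ?case
      proof (intro subsetI)
        fix xs assume xs: "xs \<in> {xs. case ic_tau (nat \<lfloor>\<epsilon> * real K\<rfloor>) xs of None \<Rightarrow> True
          | Some t \<Rightarrow> t \<le> nat \<lfloor>s1 * real K\<rfloor> \<or> nat \<lfloor>s2 * real K\<rfloor> < t} \<inter> set_pmf (ic_full K)"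
        show "xs \<in> E s1 K \<union> E s2 K"
        proof (rule ccontr)
          assume "xs \<notin> E s1 K \<union> E s2 K"
          with xs window obtain t where "ic_tau (nat \<lfloor>\<epsilon> * real K\<rfloor>) xs = Some t"
            "nat \<lfloor>s1 * real K\<rfloor> < t" "t \<le> nat \<lfloor>s2 * real K\<rfloor>" by blast
          with xs show False by auto
        qed
      qed
    qed
  qed
qed

lemma hitting_time_tendsto:
  assumes \<epsilon>: "0 < \<epsilon>" "\<epsilon> < 1/2" and \<delta>: "0 < \<delta>"
  shows "(\<lambda>K. measure_pmf.prob (ic_full K) {xs. case ic_tau (nat \<lfloor>\<epsilon> * real K\<rfloor>) xs of None \<Rightarrow> True
     | Some t \<Rightarrow> \<bar>real t / real K - (1/2) * ln (1 / (1 - 2 * \<epsilon>))\<bar> > \<delta>}) \<longlonglongrightarrow> 0"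
proof -
  define \<sigma> where "\<sigma> = (1/2) * ln (1 / (1 - 2 * \<epsilon>))"
  have \<sigma>: "0 < \<sigma>" "green_limit \<sigma> = \<epsilon>" using hitting_scale[OF \<epsilon>] by (simp_all add: \<sigma>_def)
  define d where "d = min \<delta> (\<sigma> / 2)"
  have d: "0 < d" "d \<le> \<delta>" "d < \<sigma>" using \<delta> \<sigma> by (auto simp: d_def)
  have "(\<lambda>K. measure_pmf.prob (ic_full K) {xs. case ic_tau (nat \<lfloor>\<epsilon> * real K\<rfloor>) xs of None \<Rightarrow> True
     | Some t \<Rightarrow> t \<le> nat \<lfloor>(\<sigma> - d) * real K\<rfloor> \<or> nat \<lfloor>(\<sigma> + d) * real K\<rfloor> < t}) \<longlonglongrightarrow> 0"
    using d by (intro hitting_time_window) (simp_all add: \<sigma>(2)[symmetric] green_limit_less_iff)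
  then show ?thesis
  proof (rule prob_tendsto_zero_subset[rotated])
    have window: "\<bar>real t / real K - \<sigma>\<bar> \<le> \<delta>"
      if "0 < K" "nat \<lfloor>(\<sigma> - d) * real K\<rfloor> < t" "t \<le> nat \<lfloor>(\<sigma> + d) * real K\<rfloor>" for K t
      using scaled_floor_window[OF that(1) _ _ that(2,3)] d by (simp add: abs_le_iff)
    show "eventually (\<lambda>K. {xs. case ic_tau (nat \<lfloor>\<epsilon> * real K\<rfloor>) xs of None \<Rightarrow> True
       | Some t \<Rightarrow> \<bar>real t / real K - (1/2) * ln (1 / (1 - 2 * \<epsilon>))\<bar> > \<delta>} \<inter> set_pmf (ic_full K) \<subseteq>
      {xs. case ic_tau (nat \<lfloor>\<epsilon> * real K\<rfloor>) xs of None \<Rightarrow> True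
       | Some t \<Rightarrow> t \<le> nat \<lfloor>(\<sigma> - d) * real K\<rfloor> \<or> nat \<lfloor>(\<sigma> + d) * real K\<rfloor> < t}) sequentially"
      using eventually_gt_at_top[of 0]
    proof eventually_elim
      case (elim K)
      have "t \<le> nat \<lfloor>(\<sigma> - d) * real K\<rfloor> \<or> nat \<lfloor>(\<sigma> + d) * real K\<rfloor> < t"
        if "\<delta> < \<bar>real t / real K - (1/2) * ln (1 / (1 - 2 * \<epsilon>))\<bar>" for t
        using that window[OF elim, of t] unfolding \<sigma>_def by force
      then show ?case by (intro order_trans[OF Int_lower1 case_option_Collect_subset]) auto
    qed
  qed
qed

lemma ic_path_lines_between:
  assumes path: "ic_path K (K ^ 2) xs" and F: "F = ic_R \<or> F = ic_C" and K: "0 < real K"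
    and t: "t1 < t" "t \<le> t2" "t2 \<le> K ^ 2"
    and close: "\<bar>real (F (xs ! t1)) / real K - a1\<bar> < e" "\<bar>real (F (xs ! t2)) / real K - a2\<bar> < e"
    and r: "r - a1 \<le> e" "a2 - r \<le> e"
  shows "\<bar>real (F (xs ! t)) / real K - r\<bar> < 2 * e"
proof -
  have "F (xs ! t1) \<le> F (xs ! t)" "F (xs ! t) \<le> F (xs ! t2)"
    using ic_path_mono[OF path, of t1 t] ic_path_mono[OF path, of t t2] t F by auto
  then have "real (F (xs ! t1)) / real K \<le> real (F (xs ! t)) / real K"
    "real (F (xs ! t)) / real K \<le> real (F (xs ! t2)) / real K"
    using K by (simp_all add: divide_right_mono)
  then show ?thesis using close r unfolding abs_less_iff by (intro conjI) linarith+
qed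

lemma lines_on_window:
  assumes s: "0 < s1" "s1 \<le> s2" and F: "F = ic_R \<or> F = ic_C" and \<eta>: "0 < \<eta>"
    and r: "r - (1 - exp (- s1)) \<le> \<eta> / 2" "1 - exp (- s2) - r \<le> \<eta> / 2"
  shows "(\<lambda>K. measure_pmf.prob (ic_full K) {xs. \<exists>t. nat \<lfloor>s1 * real K\<rfloor> < t \<and> t \<le> nat \<lfloor>s2 * real K\<rfloor> \<and>
     \<eta> < \<bar>real (F (xs ! t)) / real K - r\<bar>}) \<longlonglongrightarrow> 0"
proof -
  interpret T1: scaled_time "\<lambda>K. nat \<lfloor>s1 * real K\<rfloor>" s1 by (rule scaled_time_floor[OF s(1)])
  interpret T2: scaled_time "\<lambda>K. nat \<lfloor>s2 * real K\<rfloor>" s2 by (rule scaled_time_floor) (use s in simp)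
  define L where "L = (\<lambda>s' K. {xs. \<eta> / 2 \<le> \<bar>real (F (xs ! nat \<lfloor>s' * real K\<rfloor>)) / real K - (1 - exp (- s'))\<bar>})"
  have "(\<lambda>K. measure_pmf.prob (ic_full K) (L s1 K \<union> L s2 K)) \<longlonglongrightarrow> 0"
    unfolding L_def using \<eta>
    by (intro prob_Un_tendsto_zero tendsto_in_probD T1.lines_tendsto_in_prob[OF F] T2.lines_tendsto_in_prob[OF F]) simp_all
  then show ?thesis
  proof (rule prob_tendsto_zero_subset[rotated])
    show "eventually (\<lambda>K. {xs. \<exists>t. nat \<lfloor>s1 * real K\<rfloor> < t \<and> t \<le> nat \<lfloor>s2 * real K\<rfloor> \<and>
        \<eta> < \<bar>real (F (xs ! t)) / real K - r\<bar>} \<inter> set_pmf (ic_full K) \<subseteq> L s1 K \<union> L s2 K) sequentially"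
      using T2.eventually_time_bounds
    proof eventually_elim
      case (elim K)
      have K: "0 < real K" using elim by (cases K) auto
      show ?case
      proof (intro subsetI)
        fix xs assume xs: "xs \<in> {xs. \<exists>t. nat \<lfloor>s1 * real K\<rfloor> < t \<and> t \<le> nat \<lfloor>s2 * real K\<rfloor> \<and>
          \<eta> < \<bar>real (F (xs ! t)) / real K - r\<bar>} \<inter> set_pmf (ic_full K)"
        then obtain t where t: "nat \<lfloor>s1 * real K\<rfloor> < t" "t \<le> nat \<lfloor>s2 * real K\<rfloor>"
          and far: "\<eta> < \<bar>real (F (xs ! t)) / real K - r\<bar>" by blast
        have path: "ic_path K (K ^ 2) xs" using xs ic_traj_path by (simp add: ic_full_def)
        show "xs \<in> L s1 K \<union> L s2 K"
        proof (rule ccontr)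
          assume "xs \<notin> L s1 K \<union> L s2 K"
          then have close: "\<bar>real (F (xs ! nat \<lfloor>s1 * real K\<rfloor>)) / real K - (1 - exp (- s1))\<bar> < \<eta> / 2"
            "\<bar>real (F (xs ! nat \<lfloor>s2 * real K\<rfloor>)) / real K - (1 - exp (- s2))\<bar> < \<eta> / 2"
            unfolding L_def by auto
          have "nat \<lfloor>s2 * real K\<rfloor> \<le> K ^ 2" using elim by simp
          from ic_path_lines_between[OF path F K t this close r] far show False by simp
        qed
      qed
    qed
  qed
qed

lemma lines_at_hitting_time:
  assumes \<epsilon>: "0 < \<epsilon>" "\<epsilon> < 1/2" and \<eta>: "0 < \<eta>" and F: "F = ic_R \<or> F = ic_C"
  shows "(\<lambda>K. measure_pmf.prob (ic_full K) {xs. case ic_tau (nat \<lfloor>\<epsilon> * real K\<rfloor>) xs of None \<Rightarrow> True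
     | Some t \<Rightarrow> \<eta> < \<bar>real (F (xs ! t)) / real K - (1 - sqrt (1 - 2 * \<epsilon>))\<bar>}) \<longlonglongrightarrow> 0"
proof -
  define \<sigma> where "\<sigma> = (1/2) * ln (1 / (1 - 2 * \<epsilon>))"
  have \<sigma>: "0 < \<sigma>" "green_limit \<sigma> = \<epsilon>" "sqrt (1 - 2 * \<epsilon>) = exp (- \<sigma>)"
    using hitting_scale[OF \<epsilon>] by (simp_all add: \<sigma>_def)
  define d where "d = min (\<eta> / 2) (\<sigma> / 2)"
  have d: "0 < d" "d \<le> \<eta> / 2" "d < \<sigma>" using \<eta> \<sigma> by (auto simp: d_def)
  have "exp (- (\<sigma> - d)) - exp (- \<sigma>) \<le> d" "exp (- \<sigma>) - exp (- (\<sigma> + d)) \<le> d"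
    using exp_minus_diff_le[of "\<sigma> - d" \<sigma>] exp_minus_diff_le[of \<sigma> "\<sigma> + d"] d \<sigma> by simp_all
  then have "(\<lambda>K. measure_pmf.prob (ic_full K)
      ({xs. case ic_tau (nat \<lfloor>\<epsilon> * real K\<rfloor>) xs of None \<Rightarrow> True
         | Some t \<Rightarrow> t \<le> nat \<lfloor>(\<sigma> - d) * real K\<rfloor> \<or> nat \<lfloor>(\<sigma> + d) * real K\<rfloor> < t} \<union>
       {xs. \<exists>t. nat \<lfloor>(\<sigma> - d) * real K\<rfloor> < t \<and> t \<le> nat \<lfloor>(\<sigma> + d) * real K\<rfloor> \<and>
         \<eta> < \<bar>real (F (xs ! t)) / real K - (1 - exp (- \<sigma>))\<bar>})) \<longlonglongrightarrow> 0"
    using d \<eta> by (intro prob_Un_tendsto_zero hitting_time_window lines_on_window[OF _ _ F])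
      (simp_all add: \<sigma>(2)[symmetric] green_limit_less_iff)
  then show ?thesis
  proof (rule prob_tendsto_zero_subset[rotated],
      intro always_eventually allI order_trans[OF Int_lower1 case_option_Collect_subset])
    fix K xs t assume "ic_tau (nat \<lfloor>\<epsilon> * real K\<rfloor>) xs = Some t"
      and "\<eta> < \<bar>real (F (xs ! t)) / real K - (1 - sqrt (1 - 2 * \<epsilon>))\<bar>"
    then show "xs \<in> {xs. case ic_tau (nat \<lfloor>\<epsilon> * real K\<rfloor>) xs of None \<Rightarrow> True
         | Some t \<Rightarrow> t \<le> nat \<lfloor>(\<sigma> - d) * real K\<rfloor> \<or> nat \<lfloor>(\<sigma> + d) * real K\<rfloor> < t} \<union>
       {xs. \<exists>t. nat \<lfloor>(\<sigma> - d) * real K\<rfloor> < t \<and> t \<le> nat \<lfloor>(\<sigma> + d) * real K\<rfloor> \<and>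
         \<eta> < \<bar>real (F (xs ! t)) / real K - (1 - exp (- \<sigma>))\<bar>}"
      by (cases "t \<le> nat \<lfloor>(\<sigma> - d) * real K\<rfloor> \<or> nat \<lfloor>(\<sigma> + d) * real K\<rfloor> < t")
        (auto simp: \<sigma>(3) not_le not_less)
  qed simp
qed

lemma lines_at_hitting_time_dist:
  assumes \<epsilon>: "0 < \<epsilon>" "\<epsilon> < 1/2" and \<delta>: "0 < \<delta>"
  shows "(\<lambda>K. measure_pmf.prob (ic_full K)
            {xs. case ic_tau (nat \<lfloor>\<epsilon> * real K\<rfloor>) xs of
                   None \<Rightarrow> True
                 | Some t \<Rightarrow> dist (real (ic_R (xs ! t)) / real K, real (ic_C (xs ! t)) / real K)
                                  (1 - sqrt (1 - 2 * \<epsilon>), 1 - sqrt (1 - 2 * \<epsilon>)) > \<delta>})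
            \<longlonglongrightarrow> 0"
proof -
  let ?r = "1 - sqrt (1 - 2 * \<epsilon>)"
  let ?bad = "\<lambda>F K. {xs. case ic_tau (nat \<lfloor>\<epsilon> * real K\<rfloor>) xs of None \<Rightarrow> True
     | Some t \<Rightarrow> \<delta> / 2 < \<bar>real (F (xs ! t)) / real K - ?r\<bar>}"
  have halves: "\<delta> / 2 < \<bar>a - ?r\<bar> \<or> \<delta> / 2 < \<bar>b - ?r\<bar>" if "\<delta> < dist (a, b) (?r, ?r)" for a b
    using that dist_Pair_le_sum_abs[of a b ?r ?r] by linarith
  have "(\<lambda>K. measure_pmf.prob (ic_full K) (?bad ic_R K \<union> ?bad ic_C K)) \<longlonglongrightarrow> 0"
    using \<delta> by (intro prob_Un_tendsto_zero lines_at_hitting_time[OF \<epsilon>]) simp_all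
  then show ?thesis
  proof (rule prob_tendsto_zero_subset[rotated],
      intro always_eventually allI order_trans[OF Int_lower1 case_option_Collect_subset])
    fix K xs t assume tau: "ic_tau (nat \<lfloor>\<epsilon> * real K\<rfloor>) xs = Some t"
      and far: "\<delta> < dist (real (ic_R (xs ! t)) / real K, real (ic_C (xs ! t)) / real K) (?r, ?r)"
    show "xs \<in> ?bad ic_R K \<union> ?bad ic_C K" using halves[OF far] tau by auto
  qed simp
qed

theorem proposition6p2:
  fixes \<epsilon> :: real
  assumes "0 < \<epsilon>" and "\<epsilon> < 1/2"
  shows "(\<forall>\<delta>>0. (\<lambda>K. measure_pmf.prob (ic_full K)
            {xs. case ic_tau (nat \<lfloor>\<epsilon> * real K\<rfloor>) xs of
                   None \<Rightarrow> True
                 | Some t \<Rightarrow> \<bar>real t / real K - (1/2) * ln (1 / (1 - 2 * \<epsilon>))\<bar> > \<delta>})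
            \<longlonglongrightarrow> 0) \<and>
         (\<forall>\<delta>>0. (\<lambda>K. measure_pmf.prob (ic_full K)
            {xs. case ic_tau (nat \<lfloor>\<epsilon> * real K\<rfloor>) xs of
                   None \<Rightarrow> True
                 | Some t \<Rightarrow> dist (real (ic_R (xs ! t)) / real K, real (ic_C (xs ! t)) / real K)
                                  (1 - sqrt (1 - 2 * \<epsilon>), 1 - sqrt (1 - 2 * \<epsilon>)) > \<delta>})
            \<longlonglongrightarrow> 0)"
  using hitting_time_tendsto[OF assms] lines_at_hitting_time_dist[OF assms] by blast

end
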